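(* Let $m\in\mathbb Z\setminus\{0\}$ and $\xi\in\mathbb Z_m$. The assignment $a\mapsto a$, $b\mapsto e_0$ extends to a group isomorphism $f:\overline{BS}(m,\xi)\to\widetilde{BS}(m,\xi)$. Its inverse is determined by $f^{-1}(a)=a$ and $f^{-1}(e_i)=b_i$ for every $i\ge 0$, where $b_0=b$, $b_1=ab^ma^{-1}$ and $b_i=ab_{i-1}b^{-r_{i-1}(\xi)}a^{-1}$ for $i\ge 2$.
   Context: For $p,q\in\mathbb Z\setminus\{0\}$, $BS(p,q)=\langle a,b\mid ab^pa^{-1}=b^q\rangle$, marked by $(a,b)$. The space of marked groups on two generators $\mathcal G_2$ is the set of normal subgroups $N$ of the free group $\mathbb F(a,b)$ (a marked group $(G,(s_1,s_2))$ corresponds to the kernel of $\mathbb F(a,b)\to G$, $a\mapsto s_1,b\mapsto s_2$), with the ultrametric $d(N_1,N_2)=e^{-\lambda}$ for $N_1\neq N_2$, where $\lambda$ is the minimal word length of an element of $N_1\triangle N_2$. For $m\in\mathbb Z\setminus\{0\}$, $\mathbb Z_m=\varprojlim \mathbb Z/m^h\mathbb Z$ is the ring of $m$-adic integers, with the $m$-adic topology. For $\xi\in\mathbb Z_m$, $\overline{BS}(m,\xi)$ denotes the limit in $\mathcal G_2$ of $BS(m,\xi_n)$ for any sequence of integers $(\xi_n)$ with $|\xi_n|\to\infty$ and $\xi_n\to\xi$ in $\mathbb Z_m$ (this limit exists and is independent of the chosen sequence); it is marked by the images of $a,b$. The functions $r_i$: for $\xi\in\mathbb Z_m$ put $r_0(\xi)=0$,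 $s_0(\xi)=1$ and, for $i\ge1$, let $r_i(\xi)\in\{0,\dots,|m|-1\}$ and $s_i(\xi)\in\mathbb Z_m$ be the unique elements with $\xi\, s_{i-1}(\xi)=m\,s_i(\xi)+r_i(\xi)$. The group $\widetilde{BS}(m,\xi)$: let $E$ be the free abelian group with basis $e_0,e_1,e_2,\dots$ (written additively), $E_{m,\xi}\le E$ the subgroup with basis $me_0,\ e_1-r_1(\xi)e_0,\ e_2-r_2(\xi)e_0,\dots$, and $E_1\le E$ the subgroup with basis $e_1,e_2,\dots$. Let $\phi:E_{m,\xi}\to E_1$ be the isomorphism with $\phi(me_0)=e_1$ and $\phi(e_i-r_i(\xi)e_0)=e_{i+1}$ for $i\ge1$. Then $\widetilde{BS}(m,\xi)$ is the HNN extension $\langle E,a\mid a x a^{-1}=\phi(x)\ \forall x\in E_{m,\xi}\rangle$. *)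

theory Defs
  imports Main "HOL-Algebra.Group"
begin

text \<open>A word over generators of type 'g is a list of letters (g, True) = g, (g, False) = g^-1.\<close>

type_synonym 'g word = "('g \<times> bool) list"

text \<open>Congruence on words generated by free cancellation and by deleting relators
  (anywhere); its classes are the elements of the group given by the presentation.\<close>
inductive word_eq :: "'g word set \<Rightarrow> 'g word \<Rightarrow> 'g word \<Rightarrow> bool" for R where
  refl: "word_eq R w w"
| sym: "word_eq R u v \<Longrightarrow> word_eq R v u"
| trans: "word_eq R u v \<Longrightarrow> word_eq R v w \<Longrightarrow> word_eq R u w"
| cancel: "word_eq R (u @ [(x, s), (x, \<not> s)] @ v) (u @ v)"
| rel: "r \<in> R \<Longrightarrow> word_eq R (u @ r @ v) (u @ v)"

definition wclass :: "'g word set \<Rightarrow> 'g word \<Rightarrow> 'g word set" where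
  "wclass R w = {v. word_eq R v w}"

definition pres_group :: "'g word set \<Rightarrow> 'g word set monoid" where
  "pres_group R = \<lparr> carrier = range (wclass R),
     mult = (\<lambda>X Y. {w. \<exists>x\<in>X. \<exists>y\<in>Y. word_eq R w (x @ y)}),
     one = wclass R [] \<rparr>"

definition triv :: "'g word set \<Rightarrow> 'g word set" where
  "triv R = {w. word_eq R w []}"

definition gpow :: "'g \<Rightarrow> int \<Rightarrow> 'g word" where
  "gpow g k = (if 0 \<le> k then replicate (nat k) (g, True) else replicate (nat (- k)) (g, False))"

datatype gen2 = A | B

text \<open>A marked group is represented by its kernel, as a set of (not necessarily reduced)
  words in a, b. Convergence in the ultrametric: for every R, eventually the kernels agree
  on all words of length at most R (i.e. eventually d < e^-R).\<close>
definition marked_conv :: "(nat \<Rightarrow> gen2 word set) \<Rightarrow> gen2 word set \<Rightarrow> bool" where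
  "marked_conv K L \<longleftrightarrow>
     (\<forall>R::nat. \<forall>\<^sub>F n in sequentially. \<forall>w. length w \<le> R \<longrightarrow> (w \<in> K n \<longleftrightarrow> w \<in> L))"

definition BS_rel :: "int \<Rightarrow> int \<Rightarrow> gen2 word" where
  "BS_rel p q = [(A, True)] @ gpow B p @ [(A, False)] @ gpow B (- q)"

definition BS_kernel :: "int \<Rightarrow> int \<Rightarrow> gen2 word set" where
  "BS_kernel p q = triv {BS_rel p q}"

text \<open>\<open>\<int>_m = lim \<int>/m^h\<close>: compatible sequences of canonical residues mod |m|^h.\<close>
definition madic :: "int \<Rightarrow> (nat \<Rightarrow> int) set" where
  "madic m = {x. \<forall>h. x h = x (Suc h) mod \<bar>m\<bar> ^ h}"

definition madic_of_int :: "int \<Rightarrow> int \<Rightarrow> (nat \<Rightarrow> int)" where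
  "madic_of_int m z = (\<lambda>h. z mod \<bar>m\<bar> ^ h)"

definition madic_add :: "int \<Rightarrow> (nat \<Rightarrow> int) \<Rightarrow> (nat \<Rightarrow> int) \<Rightarrow> (nat \<Rightarrow> int)" where
  "madic_add m x y = (\<lambda>h. (x h + y h) mod \<bar>m\<bar> ^ h)"

definition madic_mult :: "int \<Rightarrow> (nat \<Rightarrow> int) \<Rightarrow> (nat \<Rightarrow> int) \<Rightarrow> (nat \<Rightarrow> int)" where
  "madic_mult m x y = (\<lambda>h. (x h * y h) mod \<bar>m\<bar> ^ h)"

definition madic_conv :: "int \<Rightarrow> (nat \<Rightarrow> int) \<Rightarrow> (nat \<Rightarrow> int) \<Rightarrow> bool" where
  "madic_conv m zs \<xi> \<longleftrightarrow> (\<forall>h. \<forall>\<^sub>F n in sequentially. zs n mod \<bar>m\<bar> ^ h = \<xi> h)"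

primrec rs :: "int \<Rightarrow> (nat \<Rightarrow> int) \<Rightarrow> nat \<Rightarrow> int \<times> (nat \<Rightarrow> int)" where
  "rs m \<xi> 0 = (0, madic_of_int m 1)"
| "rs m \<xi> (Suc i) = (THE (r, s). r \<in> {0..\<bar>m\<bar> - 1} \<and> s \<in> madic m \<and>
      madic_mult m \<xi> (snd (rs m \<xi> i)) = madic_add m (madic_mult m (madic_of_int m m) s) (madic_of_int m r))"

definition r_fun :: "int \<Rightarrow> (nat \<Rightarrow> int) \<Rightarrow> nat \<Rightarrow> int" where
  "r_fun m \<xi> i = fst (rs m \<xi> i)"

definition BSbar_kernel :: "int \<Rightarrow> (nat \<Rightarrow> int) \<Rightarrow> gen2 word set" where
  "BSbar_kernel m \<xi> = (THE L. \<forall>zs. filterlim (\<lambda>n. \<bar>zs n\<bar>) at_top sequentially \<and> madic_conv m zs \<xi>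
       \<longrightarrow> marked_conv (\<lambda>n. BS_kernel m (zs n)) L)"

definition BSbar :: "int \<Rightarrow> (nat \<Rightarrow> int) \<Rightarrow> gen2 word set monoid" where
  "BSbar m \<xi> = pres_group (BSbar_kernel m \<xi>)"

datatype tgen = TA | E nat

text \<open>Presentation of the HNN extension \<open>BStilde(m,\<xi>)\<close>: E free abelian on e_0, e_1, ...
  (commutator relators), plus \<open>a x a^-1 = \<phi>(x)\<close> for x in the basis of \<open>E_{m,\<xi>}\<close>.\<close>
definition BStilde_rels :: "int \<Rightarrow> (nat \<Rightarrow> int) \<Rightarrow> tgen word set" where
  "BStilde_rels m \<xi> =
     {[(E i, True), (E j, True), (E i, False), (E j, False)] | i j. True}
   \<union> {[(TA, True)] @ gpow (E 0) m @ [(TA, False), (E 1, False)]}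
   \<union> {[(TA, True), (E i, True)] @ gpow (E 0) (- r_fun m \<xi> i) @ [(TA, False), (E (Suc i), False)]
       | i. 1 \<le> i}"

definition BStilde :: "int \<Rightarrow> (nat \<Rightarrow> int) \<Rightarrow> tgen word set monoid" where
  "BStilde m \<xi> = pres_group (BStilde_rels m \<xi>)"

fun bword :: "int \<Rightarrow> (nat \<Rightarrow> int) \<Rightarrow> nat \<Rightarrow> gen2 word" where
  "bword m \<xi> 0 = [(B, True)]"
| "bword m \<xi> (Suc 0) = [(A, True)] @ gpow B m @ [(A, False)]"
| "bword m \<xi> (Suc (Suc i)) =
     [(A, True)] @ bword m \<xi> (Suc i) @ gpow B (- r_fun m \<xi> (Suc i)) @ [(A, False)]"

end

theory Submission
  imports Defs
begin

(*
  Let to_tilde send a word in a, b to the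
  word in a, e_0, e_1, ... obtained by a |-> a, b |-> e_0, and let tilde_kernel m xi
  be the set of words w whose image to_tilde w is trivial in BStilde(m,xi).  The
  proof has two independent halves.

  (1) Algebra: to_tilde induces an isomorphism from <a, b | tilde_kernel> onto
      BStilde; it is onto because to_tilde b_i = e_i in BStilde, which also
      identifies the inverse on generators (tilde_kernel_iso).
  (2) Topology: tilde_kernel m xi is the limit of the kernels of BS(m,q) when
      q -> xi m-adically and |q| -> oo, hence it is BSbar_kernel m xi
      (BSbar_kernel_eq).  For a fixed word w:
      - if w is in tilde_kernel, its triviality uses finitely many relators of
        BStilde; for q close to xi the integer digits r_i(q) agree with r_i(xi),
        b_i = b^(q s_(i-1)(q)) in BS(m,q) and every used relator dies in BS(m,q)
        (tilde_trivial_imp_BS_trivial);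
      - both HNN extensions act on explicit Britton normal forms; the map theta,
        evaluating e_i as b^(q s_(i-1)(q)), intertwines the two actions along w
        when q is close to xi and large (theta_act), and it does not kill a
        nonzero normal form for large |q| because the s_i(q) grow geometrically
        (theta_nonzero); so w is nontrivial in BS(m,q) when it is nontrivial in
        BStilde (tilde_nontrivial_imp_BS_nontrivial).
*)

definition winv :: "'g word \<Rightarrow> 'g word" where
  "winv w = rev (map (\<lambda>(x, s). (x, \<not> s)) w)"

lemma winv_simps[simp]: "winv [] = []" "winv (u @ v) = winv v @ winv u"
  "winv ((x,s) # w) = winv w @ [(x, \<not> s)]" "winv (winv w) = w"
  by (auto simp: winv_def rev_map[symmetric] comp_def case_prod_beta)

lemma we_refl[intro, simp]: "word_eq R w w" by (rule word_eq.refl)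

lemma we_trans[trans]: "word_eq R u v \<Longrightarrow> word_eq R v w \<Longrightarrow> word_eq R u w"
  by (rule word_eq.trans)

lemma we_sym: "word_eq R u v \<Longrightarrow> word_eq R v u" by (rule word_eq.sym)

lemma we_cancel'[intro, simp]: "word_eq R (u @ (x, s) # (x, \<not> s) # v) (u @ v)"
  using word_eq.cancel[of R u x s v] by simp

lemma we_cong_mid: "word_eq R u v \<Longrightarrow> word_eq R (p @ u @ t) (p @ v @ t)"
proof (induction rule: word_eq.induct)
  case (refl w) then show ?case by (rule word_eq.refl)
next
  case (sym u v) then show ?case by (blast intro: word_eq.sym)
next
  case (trans u v w) then show ?case by (metis word_eq.trans)
next
  case (cancel u x s v)
  from word_eq.cancel[of R "p @ u" x s "v @ t"] show ?case by simp
next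
  case (rel r u v)
  from word_eq.rel[OF rel, of "p @ u" "v @ t"] show ?case by simp
qed

lemma we_app: "word_eq R u u' \<Longrightarrow> word_eq R v v' \<Longrightarrow> word_eq R (u @ v) (u' @ v')"
  using we_cong_mid[of R u u' "[]" v] we_cong_mid[of R v v' u' "[]"] by (auto intro: we_trans)

lemma we_rel0: "r \<in> R \<Longrightarrow> word_eq R r []"
  using word_eq.rel[of r R "[]" "[]"] by simp

lemma we_inv_r: "word_eq R (w @ winv w) []"
proof (induction w)
  case Nil then show ?case by simp
next
  case (Cons a w)
  obtain x s where a: "a = (x, s)" by (cases a)
  have "word_eq R ([(x,s)] @ (w @ winv w) @ [(x, \<not> s)]) ([(x,s)] @ [] @ [(x, \<not> s)])"
    using we_cong_mid[OF Cons] by blast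
  also have "word_eq R \<dots> []" using we_cancel'[of R "[]" x s "[]"] by simp
  finally show ?case using a by simp
qed

lemma we_inv_l: "word_eq R (winv w @ w) []"
  using we_inv_r[of R "winv w"] by simp

lemma we_mono: "word_eq R u v \<Longrightarrow> R \<subseteq> R' \<Longrightarrow> word_eq R' u v"
  by (induction rule: word_eq.induct) (auto intro: word_eq.intros)

lemma we_finite: "word_eq R u v \<Longrightarrow> \<exists>R0. R0 \<subseteq> R \<and> finite R0 \<and> word_eq R0 u v"
proof (induction rule: word_eq.induct)
  case (trans u v w)
  then obtain R1 R2 where "R1 \<subseteq> R" "finite R1" "word_eq R1 u v" "R2 \<subseteq> R" "finite R2" "word_eq R2 v w"
    by blast
  then show ?case
    by (intro exI[of _ "R1 \<union> R2"]) (auto intro: we_trans we_mono)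
next
  case (rel r u v) then show ?case
    by (intro exI[of _ "{r}"]) (auto intro: word_eq.intros)
qed (auto intro: word_eq.intros)

lemma we_move_r: "word_eq R (u @ v) w \<Longrightarrow> word_eq R u (w @ winv v)"
proof -
  assume a: "word_eq R (u @ v) w"
  have "word_eq R u (u @ v @ winv v)" using we_app[OF we_refl[of R u] we_sym[OF we_inv_r[of R v]]] by simp
  also have "word_eq R (u @ v @ winv v) (w @ winv v)" using we_app[OF a we_refl[of R "winv v"]] by simp
  finally show ?thesis .
qed

lemma we_move_l: "word_eq R (v @ u) w \<Longrightarrow> word_eq R u (winv v @ w)"
proof -
  assume a: "word_eq R (v @ u) w"
  have "word_eq R u (winv v @ v @ u)" using we_app[OF we_sym[OF we_inv_l[of R v]] we_refl[of R u]] by simp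
  also have "word_eq R (winv v @ v @ u) (winv v @ w)" using we_app[OF we_refl[of R "winv v"] a] by simp
  finally show ?thesis .
qed

lemma we_triv_eq: "word_eq R (u @ winv v) [] \<Longrightarrow> word_eq R u v"
  using we_move_r[of R u "winv v" "[]"] by simp

lemma we_eq_triv: "word_eq R u v \<Longrightarrow> word_eq R (u @ winv v) []"
  using we_app[of R u v "winv v" "winv v"] we_inv_r[of R v] by (auto intro: we_trans)

lemma we_winv: "word_eq R u v \<Longrightarrow> word_eq R (winv u) (winv v)"
  using we_move_l[of R u "winv v" "[]"] we_eq_triv[of R u v] by (simp add: we_sym)

lemma comm_inv_l: "word_eq R (u @ v) (v @ u) \<Longrightarrow> word_eq R (winv u @ v) (v @ winv u)"
proof -
  assume c: "word_eq R (u @ v) (v @ u)"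
  have "word_eq R (winv u @ v) (winv u @ v @ u @ winv u)"
    using we_app[OF we_refl[of R "winv u @ v"] we_sym[OF we_inv_r[of R u]]] by simp
  also have "word_eq R \<dots> (winv u @ (u @ v) @ winv u)"
    using we_app[OF we_refl[of R "winv u"] we_app[OF we_sym[OF c] we_refl[of R "winv u"]]] by simp
  also have "word_eq R \<dots> (v @ winv u)"
    using we_app[OF we_inv_l[of R u] we_refl[of R "v @ winv u"]] by simp
  finally show ?thesis .
qed

lemma comm_inv_r: "word_eq R (u @ v) (v @ u) \<Longrightarrow> word_eq R (u @ winv v) (winv v @ u)"
  using comm_inv_l[of R v u] by (blast intro: we_sym)

definition subst :: "('g \<Rightarrow> 'h word) \<Rightarrow> 'g word \<Rightarrow> 'h word" where
  "subst \<sigma> w = concat (map (\<lambda>(x, s). if s then \<sigma> x else winv (\<sigma> x)) w)"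

lemma subst_simps[simp]: "subst \<sigma> [] = []" "subst \<sigma> (u @ v) = subst \<sigma> u @ subst \<sigma> v"
  "subst \<sigma> ((x, s) # w) = (if s then \<sigma> x else winv (\<sigma> x)) @ subst \<sigma> w"
  by (auto simp: subst_def)

lemma subst_winv[simp]: "subst \<sigma> (winv w) = winv (subst \<sigma> w)"
  by (induction w) auto

lemma we_subst:
  assumes "word_eq R u v" and "\<And>r. r \<in> R \<Longrightarrow> word_eq R' (subst \<sigma> r) []"
  shows "word_eq R' (subst \<sigma> u) (subst \<sigma> v)"
  using assms(1)
proof (induction rule: word_eq.induct)
  case (sym u v) then show ?case by (blast intro: we_sym)
next
  case (trans u v w) then show ?case by (blast intro: we_trans)
next
  case (cancel u x s v)
  have c: "word_eq R' (subst \<sigma> [(x, s), (x, \<not> s)]) []"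
    by (cases s) (auto intro: we_inv_r we_inv_l)
  show ?case using we_app[OF we_refl[of R' "subst \<sigma> u"] we_app[OF c we_refl[of R' "subst \<sigma> v"]]]
    by simp
next
  case (rel r u v)
  have c: "word_eq R' (subst \<sigma> r) []" using assms(2) rel by blast
  show ?case using we_app[OF we_refl[of R' "subst \<sigma> u"] we_app[OF c we_refl[of R' "subst \<sigma> v"]]]
    by simp
qed auto

lemma subst_id:
  assumes "\<And>x. word_eq R (\<tau> x) [(x, True)]"
  shows "word_eq R (subst \<tau> w) w"
proof (induction w)
  case Nil then show ?case by simp
next
  case (Cons a w)
  obtain x s where a: "a = (x, s)" by (cases a)
  have c: "word_eq R (if s then \<tau> x else winv (\<tau> x)) [(x, s)]"
    using assms[of x] we_winv[OF assms[of x]] by (cases s) (auto simp: winv_def)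
  show ?case using we_app[OF c Cons] a by simp
qed

lemma gpow_0[simp]: "gpow g 0 = []" by (simp add: gpow_def)
lemma gpow_1[simp]: "gpow g 1 = [(g, True)]" by (simp add: gpow_def)
lemma gpow_m1[simp]: "gpow g (-1) = [(g, False)]" by (simp add: gpow_def)

lemma winv_replicate[simp]: "winv (replicate n (x, s)) = replicate n (x, \<not> s)"
  by (simp add: winv_def)

lemma winv_gpow[simp]: "winv (gpow g k) = gpow g (- k)"
  by (auto simp: gpow_def)

lemma rep_cancel: "word_eq R (replicate a (g, s) @ replicate b (g, \<not> s))
   (if b \<le> a then replicate (a - b) (g, s) else replicate (b - a) (g, \<not> s))"
proof (induction a arbitrary: b)
  case 0 then show ?case by auto
next
  case (Suc a)
  show ?case
  proof (cases b)
    case 0 then show ?thesis by auto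
  next
    case (Suc b')
    have e: "replicate (Suc a) (g, s) @ replicate b (g, \<not> s) =
      replicate a (g, s) @ [(g, s), (g, \<not> s)] @ replicate b' (g, \<not> s)"
      using Suc by (simp add: replicate_append_same[symmetric])
    have "word_eq R (replicate a (g, s) @ [(g, s), (g, \<not> s)] @ replicate b' (g, \<not> s))
                    (replicate a (g, s) @ replicate b' (g, \<not> s))"
      by (rule word_eq.cancel)
    then show ?thesis using e Suc.IH[of b'] Suc by (auto intro: we_trans)
  qed
qed

lemma gpow_add: "word_eq R (gpow g x @ gpow g y) (gpow g (x + y))"
proof -
  consider "0 \<le> x" "0 \<le> y" | "0 \<le> x" "y < 0" | "x < 0" "0 \<le> y" | "x < 0" "y < 0" by linarith
  then show ?thesis
  proof cases
    case 1 then show ?thesis by (simp add: gpow_def replicate_add[symmetric] nat_add_distrib)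
  next
    case 2
    from rep_cancel[of R "nat x" g True "nat (-y)"] 2 show ?thesis
      by (auto simp: gpow_def nat_diff_distrib split: if_splits)
        (smt (verit) nat_diff_distrib' nat_less_eq_zless)+
  next
    case 3
    from rep_cancel[of R "nat (-x)" g False "nat y"] 3 show ?thesis
      by (auto simp: gpow_def nat_diff_distrib split: if_splits)
        (smt (verit) nat_diff_distrib' nat_less_eq_zless)+
  next
    case 4
    then have "nat (- x - y) = nat (-x) + nat (-y)" by simp
    then show ?thesis using 4 by (simp add: gpow_def replicate_add[symmetric])
  qed
qed

lemma gpow_add': "word_eq R (gpow g x @ gpow g y @ w) (gpow g (x + y) @ w)"
  using we_app[OF gpow_add we_refl, of R g x y w] by simp

lemma comm_pows: "word_eq R (gpow g a @ gpow g b @ winv (gpow g a) @ winv (gpow g b)) []"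
proof -
  have "word_eq R (gpow g a @ gpow g b @ gpow g (-a) @ gpow g (-b)) (gpow g (a + b) @ gpow g (-a) @ gpow g (-b))"
    by (rule gpow_add')
  also have "word_eq R \<dots> (gpow g (a + b + - a) @ gpow g (-b))" by (rule gpow_add')
  also have "word_eq R \<dots> (gpow g (a + b + - a + - b))" by (rule gpow_add)
  finally show ?thesis by simp
qed

lemma wclass_eq: "wclass R u = wclass R v \<longleftrightarrow> word_eq R u v"
proof
  assume "wclass R u = wclass R v"
  moreover have "u \<in> wclass R u" by (simp add: wclass_def)
  ultimately show "word_eq R u v" by (simp add: wclass_def)
next
  assume a: "word_eq R u v"
  show "wclass R u = wclass R v"
    unfolding wclass_def using a by (blast intro: we_trans we_sym)
qed

lemma pres_mult: "mult (pres_group R) (wclass R u) (wclass R v) = wclass R (u @ v)"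
proof -
  have 1: "w \<in> wclass R (u @ v)" if "x \<in> wclass R u" "y \<in> wclass R v" "word_eq R w (x @ y)" for w x y
    using that unfolding wclass_def by (auto intro: we_trans we_app)
  have 2: "\<exists>x\<in>wclass R u. \<exists>y\<in>wclass R v. word_eq R w (x @ y)" if "w \<in> wclass R (u @ v)" for w
    using that unfolding wclass_def by auto
  show ?thesis unfolding pres_group_def using 1 2 by auto
qed

section \<open>The presentation \<open>\<langle>a, b | tilde_kernel\<rangle>\<close> of \<open>BStilde(m,\<xi>)\<close>\<close>

fun tilde_letter :: "gen2 \<Rightarrow> tgen" where "tilde_letter A = TA" | "tilde_letter B = E 0"

definition to_tilde :: "gen2 word \<Rightarrow> tgen word" where
  "to_tilde = subst (\<lambda>x. [(tilde_letter x, True)])"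

lemma to_tilde_simps[simp]: "to_tilde [] = []" "to_tilde (u @ v) = to_tilde u @ to_tilde v"
  "to_tilde ((x, s) # w) = (tilde_letter x, s) # to_tilde w" "to_tilde (winv w) = winv (to_tilde w)"
  by (auto simp: to_tilde_def)

lemma to_tilde_rep[simp]: "to_tilde (replicate n (x, s)) = replicate n (tilde_letter x, s)"
  by (induction n) auto

lemma to_tilde_gpow[simp]: "to_tilde (gpow B k) = gpow (E 0) k"
  by (simp add: gpow_def)

lemma to_tilde_letters: "\<forall>p \<in> set (to_tilde w). fst p = TA \<or> fst p = E 0"
proof (induction w)
  case (Cons a w)
  obtain x s where "a = (x, s)" by (cases a)
  then show ?case using Cons by (cases x) auto
qed simp

text \<open>Words in \<open>a, b\<close> whose image is trivial in \<open>BStilde(m,\<xi>)\<close>; it will turn out to be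
  the kernel of \<open>BSbar(m,\<xi>)\<close>.\<close>
definition tilde_kernel :: "int \<Rightarrow> (nat \<Rightarrow> int) \<Rightarrow> gen2 word set" where
  "tilde_kernel m \<xi> = {w. word_eq (BStilde_rels m \<xi>) (to_tilde w) []}"

lemma tilde_kernel_iff: "word_eq (tilde_kernel m \<xi>) u v \<longleftrightarrow> word_eq (BStilde_rels m \<xi>) (to_tilde u) (to_tilde v)"
proof
  assume "word_eq (tilde_kernel m \<xi>) u v"
  then show "word_eq (BStilde_rels m \<xi>) (to_tilde u) (to_tilde v)"
    unfolding to_tilde_def by (rule we_subst) (simp add: tilde_kernel_def to_tilde_def)
next
  assume a: "word_eq (BStilde_rels m \<xi>) (to_tilde u) (to_tilde v)"
  have "word_eq (BStilde_rels m \<xi>) (to_tilde (u @ winv v)) []"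
    using we_eq_triv[OF a] by simp
  then have "word_eq (tilde_kernel m \<xi>) (u @ winv v) []" by (intro we_rel0) (simp add: tilde_kernel_def)
  then show "word_eq (tilde_kernel m \<xi>) u v" by (rule we_triv_eq)
qed

lemma rel_E1: "word_eq (BStilde_rels m \<xi>) ([(TA, True)] @ gpow (E 0) m @ [(TA, False)]) [(E 1, True)]"
proof -
  have "word_eq (BStilde_rels m \<xi>) (([(TA, True)] @ gpow (E 0) m @ [(TA, False)]) @ [(E 1, False)]) []"
    by (rule we_rel0) (simp add: BStilde_rels_def)
  from we_move_r[OF this] show ?thesis by (simp add: winv_def)
qed

lemma rel_Ei: "1 \<le> i \<Longrightarrow> word_eq (BStilde_rels m \<xi>)
   ([(TA, True), (E i, True)] @ gpow (E 0) (- r_fun m \<xi> i) @ [(TA, False)]) [(E (Suc i), True)]"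
proof -
  assume i: "1 \<le> i"
  have "word_eq (BStilde_rels m \<xi>) (([(TA, True), (E i, True)] @ gpow (E 0) (- r_fun m \<xi> i) @ [(TA, False)]) @ [(E (Suc i), False)]) []"
    by (rule we_rel0) (use i in \<open>auto simp: BStilde_rels_def\<close>)
  from we_move_r[OF this] show ?thesis by (simp add: winv_def)
qed

lemma to_tilde_bword: "word_eq (BStilde_rels m \<xi>) (to_tilde (bword m \<xi> i)) [(E i, True)]"
proof (induction m \<xi> i rule: bword.induct)
  case (1 m \<xi>) then show ?case by simp
next
  case (2 m \<xi>) then show ?case using rel_E1[of m \<xi>] by simp
next
  case (3 m \<xi> i)
  have "word_eq (BStilde_rels m \<xi>) ([(TA, True)] @ to_tilde (bword m \<xi> (Suc i)) @ gpow (E 0) (- r_fun m \<xi> (Suc i)) @ [(TA, False)])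
     ([(TA, True)] @ [(E (Suc i), True)] @ gpow (E 0) (- r_fun m \<xi> (Suc i)) @ [(TA, False)])"
    by (intro we_app we_refl 3)
  also have "word_eq (BStilde_rels m \<xi>) \<dots> [(E (Suc (Suc i)), True)]"
    using rel_Ei[of "Suc i" m \<xi>] by simp
  finally show ?case by simp
qed

definition from_tilde :: "int \<Rightarrow> (nat \<Rightarrow> int) \<Rightarrow> tgen word \<Rightarrow> gen2 word" where
  "from_tilde m \<xi> = subst (\<lambda>x. case x of TA \<Rightarrow> [(A, True)] | E i \<Rightarrow> bword m \<xi> i)"

lemma from_tilde_simps[simp]: "from_tilde m \<xi> [] = []"
  "from_tilde m \<xi> (u @ v) = from_tilde m \<xi> u @ from_tilde m \<xi> v"
  "from_tilde m \<xi> ((TA, s) # w) = (A, s) # from_tilde m \<xi> w"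
  "from_tilde m \<xi> ((E i, s) # w) = (if s then bword m \<xi> i else winv (bword m \<xi> i)) @ from_tilde m \<xi> w"
  by (simp_all add: from_tilde_def winv_def)

lemma from_tilde_to_tilde[simp]: "from_tilde m \<xi> (to_tilde w) = w"
proof (induction w)
  case (Cons a w)
  obtain x s where "a = (x, s)" by (cases a)
  then show ?case using Cons by (cases x) auto
qed simp

lemma from_tilde_gpow_E0[simp]: "from_tilde m \<xi> (gpow (E 0) k) = gpow B k"
proof -
  have "from_tilde m \<xi> (replicate n (E 0, s)) = replicate n (B, s)" for n s
    by (induction n) (auto simp: winv_def)
  then show ?thesis by (simp add: gpow_def)
qed

lemma to_tilde_subst: "to_tilde (subst \<sigma> w) = subst (to_tilde \<circ> \<sigma>) w"
  by (induction w) auto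

lemma to_tilde_from_tilde: "word_eq (BStilde_rels m \<xi>) (to_tilde (from_tilde m \<xi> w)) w"
  unfolding from_tilde_def to_tilde_subst
  by (rule subst_id) (auto simp: to_tilde_bword split: tgen.splits)

definition iso_map :: "int \<Rightarrow> (nat \<Rightarrow> int) \<Rightarrow> gen2 word set \<Rightarrow> tgen word set" where
  "iso_map m \<xi> X = {v. \<exists>w\<in>X. word_eq (BStilde_rels m \<xi>) v (to_tilde w)}"

lemma iso_map_wclass: "iso_map m \<xi> (wclass (tilde_kernel m \<xi>) u) = wclass (BStilde_rels m \<xi>) (to_tilde u)"
proof (intro Set.set_eqI iffI)
  fix v assume "v \<in> iso_map m \<xi> (wclass (tilde_kernel m \<xi>) u)"
  then obtain w where w: "word_eq (tilde_kernel m \<xi>) w u" "word_eq (BStilde_rels m \<xi>) v (to_tilde w)"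
    unfolding iso_map_def wclass_def by blast
  have "word_eq (BStilde_rels m \<xi>) (to_tilde w) (to_tilde u)" using w(1) tilde_kernel_iff by blast
  then show "v \<in> wclass (BStilde_rels m \<xi>) (to_tilde u)" using w(2) unfolding wclass_def by (blast intro: we_trans)
next
  fix v assume "v \<in> wclass (BStilde_rels m \<xi>) (to_tilde u)"
  then show "v \<in> iso_map m \<xi> (wclass (tilde_kernel m \<xi>) u)" unfolding iso_map_def wclass_def by blast
qed

lemma iso_map_iso: "iso_map m \<xi> \<in> iso (pres_group (tilde_kernel m \<xi>)) (BStilde m \<xi>)"
proof -
  let ?f = "iso_map m \<xi>" and ?K = "tilde_kernel m \<xi>" and ?R = "BStilde_rels m \<xi>"
  let ?G = "pres_group ?K"
  have carG: "carrier ?G = range (wclass ?K)" by (simp add: pres_group_def)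
  have carH: "carrier (BStilde m \<xi>) = range (wclass ?R)" by (simp add: pres_group_def BStilde_def)
  have hom: "?f \<in> hom ?G (BStilde m \<xi>)"
  proof (rule homI)
    fix x assume "x \<in> carrier ?G"
    then show "?f x \<in> carrier (BStilde m \<xi>)" using carG carH by (auto simp: iso_map_wclass)
  next
    fix x y assume "x \<in> carrier ?G" "y \<in> carrier ?G"
    then obtain u v where "x = wclass ?K u" "y = wclass ?K v" using carG by auto
    then show "?f (x \<otimes>\<^bsub>?G\<^esub> y) = ?f x \<otimes>\<^bsub>BStilde m \<xi>\<^esub> ?f y"
      by (simp add: pres_mult iso_map_wclass BStilde_def)
  qed
  have inj: "inj_on ?f (carrier ?G)"
  proof (rule inj_onI)
    fix x y assume "x \<in> carrier ?G" "y \<in> carrier ?G" "?f x = ?f y"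
    then obtain u v where "x = wclass ?K u" "y = wclass ?K v" "?f x = ?f y" using carG by auto
    then show "x = y" by (simp add: iso_map_wclass wclass_eq tilde_kernel_iff)
  qed
  have img: "\<And>w. wclass ?R w = ?f (wclass ?K (from_tilde m \<xi> w))"
    by (simp add: iso_map_wclass wclass_eq we_sym[OF to_tilde_from_tilde])
  have surj: "?f ` carrier ?G = carrier (BStilde m \<xi>)"
  proof
    show "?f ` carrier ?G \<subseteq> carrier (BStilde m \<xi>)" using carG carH by (auto simp: iso_map_wclass)
    show "carrier (BStilde m \<xi>) \<subseteq> ?f ` carrier ?G" using carG carH img by auto
  qed
  show ?thesis using hom inj surj by (auto simp: iso_def bij_betw_def)
qed

lemma tilde_kernel_iso:
  "\<exists>f. f \<in> iso (pres_group (tilde_kernel m \<xi>)) (BStilde m \<xi>)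
     \<and> f (wclass (tilde_kernel m \<xi>) [(A, True)]) = wclass (BStilde_rels m \<xi>) [(TA, True)]
     \<and> f (wclass (tilde_kernel m \<xi>) [(B, True)]) = wclass (BStilde_rels m \<xi>) [(E 0, True)]
     \<and> inv_into (carrier (pres_group (tilde_kernel m \<xi>))) f (wclass (BStilde_rels m \<xi>) [(TA, True)])
         = wclass (tilde_kernel m \<xi>) [(A, True)]
     \<and> (\<forall>i. inv_into (carrier (pres_group (tilde_kernel m \<xi>))) f (wclass (BStilde_rels m \<xi>) [(E i, True)])
         = wclass (tilde_kernel m \<xi>) (bword m \<xi> i))"
proof (intro exI conjI allI)
  let ?f = "iso_map m \<xi>" and ?K = "tilde_kernel m \<xi>" and ?R = "BStilde_rels m \<xi>"
  have invf: "inv_into (carrier (pres_group ?K)) ?f (?f (wclass ?K u)) = wclass ?K u" for u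
    using iso_map_iso[of m \<xi>] by (intro inv_into_f_f) (auto simp: iso_def bij_betw_def pres_group_def)
  show "?f \<in> iso (pres_group ?K) (BStilde m \<xi>)" by (rule iso_map_iso)
  show "?f (wclass ?K [(A, True)]) = wclass ?R [(TA, True)]"
    "?f (wclass ?K [(B, True)]) = wclass ?R [(E 0, True)]"
    by (simp_all add: iso_map_wclass)
  show "inv_into (carrier (pres_group ?K)) ?f (wclass ?R [(TA, True)]) = wclass ?K [(A, True)]"
    using invf[of "[(A, True)]"] by (simp add: iso_map_wclass)
  fix i
  have "wclass ?R [(E i, True)] = ?f (wclass ?K (bword m \<xi> i))"
    by (simp add: iso_map_wclass wclass_eq we_sym[OF to_tilde_bword])
  then show "inv_into (carrier (pres_group ?K)) ?f (wclass ?R [(E i, True)]) = wclass ?K (bword m \<xi> i)"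
    using invf by simp
qed

section \<open>\<open>m\<close>-adic integers and the digits \<open>r\<^sub>i(\<xi>)\<close>\<close>

lemma cancel_dvd_m:
  fixes m a b N :: int
  assumes "m \<noteq> 0" "\<bar>m\<bar> * N dvd m * a - m * b"
  shows "a mod N = b mod N"
proof -
  have "\<bar>m\<bar> * N dvd m * (a - b)" using assms(2) by (simp add: algebra_simps)
  then have "m * N dvd m * (a - b)" by (cases "m < 0") auto
  then have "N dvd a - b" using assms(1) by simp
  then show ?thesis by (simp add: mod_eq_dvd_iff)
qed

lemma mod_abs_lin: "0 \<le> r \<Longrightarrow> r < \<bar>m\<bar> \<Longrightarrow> (m * k + r) mod \<bar>m\<bar> = (r::int)"
proof -
  assume r: "0 \<le> r" "r < \<bar>m\<bar>"
  have "\<bar>m\<bar> dvd (m * k + r) - r" by simp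
  then have "(m * k + r) mod \<bar>m\<bar> = r mod \<bar>m\<bar>" by (simp only: mod_eq_dvd_iff)
  then show ?thesis using r by simp
qed

lemma madicD: "x \<in> madic m \<Longrightarrow> x h = x (Suc h) mod \<bar>m\<bar> ^ h"
  unfolding madic_def by blast

lemma madicI: "(\<And>h. x h = x (Suc h) mod \<bar>m\<bar> ^ h) \<Longrightarrow> x \<in> madic m"
  unfolding madic_def by blast

lemma madic_mod:
  assumes "x \<in> madic m" "h \<le> h'"
  shows "x h = x h' mod \<bar>m\<bar> ^ h"
  using assms(2)
proof (induction h' rule: dec_induct)
  case base
  have e: "x h = x (Suc h) mod \<bar>m\<bar> ^ h" using assms(1) by (rule madicD)
  have "x h mod \<bar>m\<bar> ^ h = (x (Suc h) mod \<bar>m\<bar> ^ h) mod \<bar>m\<bar> ^ h" using e by (rule arg_cong)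
  then show ?case using e by (simp only: mod_mod_trivial)
next
  case (step k)
  have e: "x k = x (Suc k) mod \<bar>m\<bar> ^ k" using assms(1) by (rule madicD)
  have d: "\<bar>m\<bar> ^ h dvd \<bar>m\<bar> ^ k" using step(1) by (simp add: le_imp_power_dvd)
  have "x h = (x (Suc k) mod \<bar>m\<bar> ^ k) mod \<bar>m\<bar> ^ h" using step(3) e by simp
  also have "\<dots> = x (Suc k) mod \<bar>m\<bar> ^ h" by (rule mod_mod_cancel[OF d])
  finally show ?case .
qed

lemma madic_range:
  assumes "x \<in> madic m" "m \<noteq> 0"
  shows "0 \<le> x h \<and> x h < \<bar>m\<bar> ^ h"
proof -
  have e: "x h = x (Suc h) mod \<bar>m\<bar> ^ h" using assms(1) by (rule madicD)
  have p: "\<bar>m\<bar> ^ h > 0" using assms(2) by simp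
  show ?thesis unfolding e using p by (simp only: pos_mod_sign pos_mod_bound)
qed

lemma madic_mod_self: "x \<in> madic m \<Longrightarrow> m \<noteq> 0 \<Longrightarrow> x h mod \<bar>m\<bar> ^ h = x h"
  using madic_range[of x m h] by (simp add: mod_pos_pos_trivial)

lemma approx_mono:
  assumes xi: "\<xi> \<in> madic m" and q: "q mod \<bar>m\<bar> ^ H = \<xi> H" and h: "H' \<le> H"
  shows "q mod \<bar>m\<bar> ^ H' = \<xi> H'"
proof -
  have "\<xi> H' = \<xi> H mod \<bar>m\<bar> ^ H'" by (rule madic_mod[OF xi h])
  also have "\<dots> = (q mod \<bar>m\<bar> ^ H) mod \<bar>m\<bar> ^ H'" using q by simp
  also have "\<dots> = q mod \<bar>m\<bar> ^ H'" by (rule mod_mod_cancel) (simp add: le_imp_power_dvd h)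
  finally show ?thesis by simp
qed

lemma madic_mult_in: "x \<in> madic m \<Longrightarrow> y \<in> madic m \<Longrightarrow> madic_mult m x y \<in> madic m"
proof -
  assume x: "x \<in> madic m" and y: "y \<in> madic m"
  have "(x h * y h) mod \<bar>m\<bar> ^ h = ((x (Suc h) * y (Suc h)) mod \<bar>m\<bar> ^ Suc h) mod \<bar>m\<bar> ^ h" for h
  proof -
    have d: "\<bar>m\<bar> ^ h dvd \<bar>m\<bar> ^ Suc h" by (simp add: le_imp_power_dvd)
    have "x h = x (Suc h) mod \<bar>m\<bar> ^ h" "y h = y (Suc h) mod \<bar>m\<bar> ^ h" using x y by (auto intro: madicD)
    then have "(x h * y h) mod \<bar>m\<bar> ^ h = (x (Suc h) * y (Suc h)) mod \<bar>m\<bar> ^ h"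
      by (simp add: mod_mult_eq)
    then show ?thesis using d by (simp add: mod_mod_cancel)
  qed
  then show ?thesis unfolding madic_mult_def by (intro madicI) simp
qed

lemma madic_of_int_1: "m \<noteq> 0 \<Longrightarrow> madic_of_int m 1 \<in> madic m"
proof -
  assume m: "m \<noteq> 0"
  have "1 mod \<bar>m\<bar> ^ h = (1 mod \<bar>m\<bar> ^ Suc h) mod \<bar>m\<bar> ^ h" for h
    by (rule mod_mod_cancel[symmetric]) (simp add: le_imp_power_dvd)
  then show ?thesis unfolding madic_def madic_of_int_def by blast
qed

lemma madic_divmod_exists:
  assumes m: "m \<noteq> 0" and ym: "y \<in> madic m"
  shows "\<exists>r s. r \<in> {0..\<bar>m\<bar> - 1} \<and> s \<in> madic m \<and> (\<forall>h. (m * s h + r) mod \<bar>m\<bar> ^ h = y h)"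
proof -
  define r where "r = y 1"
  define d where "d h = (y (Suc h) - r) div m" for h
  define s where "s h = d h mod \<bar>m\<bar> ^ h" for h
  have yd: "y (Suc h) = r + m * d h" for h
  proof -
    have "y (Suc h) mod \<bar>m\<bar> = r" using madic_mod[OF ym, of 1 "Suc h"] by (simp add: r_def)
    moreover have "r mod \<bar>m\<bar> = r" using madic_mod_self[OF ym m, of 1] by (simp add: r_def)
    ultimately have "\<bar>m\<bar> dvd y (Suc h) - r" by (simp add: mod_eq_dvd_iff[symmetric])
    then show ?thesis by (simp add: d_def)
  qed
  have eq: "(m * s h + r) mod \<bar>m\<bar> ^ h = y h" for h
  proof -
    have sd: "s h = d h - \<bar>m\<bar> ^ h * (d h div \<bar>m\<bar> ^ h)" by (simp add: s_def minus_mult_div_eq_mod)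
    have "(m * s h + r) - y (Suc h) = (\<bar>m\<bar> * \<bar>m\<bar> ^ h) * (- sgn m * (d h div \<bar>m\<bar> ^ h))"
      using yd[of h] unfolding sd by (simp add: algebra_simps abs_mult_sgn)
    then have "\<bar>m\<bar> ^ h dvd (m * s h + r) - y (Suc h)" by (metis dvd_mult dvd_mult2 dvd_refl)
    then have "(m * s h + r) mod \<bar>m\<bar> ^ h = y (Suc h) mod \<bar>m\<bar> ^ h" by (simp add: mod_eq_dvd_iff)
    then show ?thesis using madic_mod[OF ym, of h "Suc h"] by simp
  qed
  have "s h = s (Suc h) mod \<bar>m\<bar> ^ h" for h
  proof -
    have "y (Suc h) mod \<bar>m\<bar> ^ Suc h = y (Suc (Suc h)) mod \<bar>m\<bar> ^ Suc h"
      using madicD[OF ym, of "Suc h"] by simp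
    then have "\<bar>m\<bar> * \<bar>m\<bar>^h dvd m * d h - m * d (Suc h)"
      using yd[of h] yd[of "Suc h"] by (simp only: mod_eq_dvd_iff) simp
    then have "d h mod \<bar>m\<bar>^h = d (Suc h) mod \<bar>m\<bar>^h" by (rule cancel_dvd_m[OF m])
    moreover have "s (Suc h) mod \<bar>m\<bar> ^ h = d (Suc h) mod \<bar>m\<bar>^h"
      unfolding s_def by (rule mod_mod_cancel) (simp add: le_imp_power_dvd)
    ultimately show ?thesis by (simp add: s_def)
  qed
  then have "s \<in> madic m" by (rule madicI)
  moreover have "r \<in> {0..\<bar>m\<bar> - 1}" using madic_range[OF ym m, of 1] by (simp add: r_def)
  ultimately show ?thesis using eq by blast
qed

lemma madic_divmod_unique:
  assumes m: "m \<noteq> 0"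
    and r: "r \<in> {0..\<bar>m\<bar> - 1}" "s \<in> madic m" "\<And>h. (m * s h + r) mod \<bar>m\<bar> ^ h = y h"
    and r': "r' \<in> {0..\<bar>m\<bar> - 1}" "s' \<in> madic m" "\<And>h. (m * s' h + r') mod \<bar>m\<bar> ^ h = y h"
  shows "r' = r \<and> s' = s"
proof -
  have "r' = (m * s' 1 + r') mod \<bar>m\<bar>" using r'(1) by (simp add: mod_abs_lin)
  also have "\<dots> = (m * s 1 + r) mod \<bar>m\<bar>" using r(3)[of 1] r'(3)[of 1] by simp
  also have "\<dots> = r" using r(1) by (simp add: mod_abs_lin)
  finally have rr: "r' = r" .
  have "s' h = s h" for h
  proof -
    have "(m * s' (Suc h) + r) mod \<bar>m\<bar> ^ Suc h = (m * s (Suc h) + r) mod \<bar>m\<bar> ^ Suc h"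
      using r(3)[of "Suc h"] r'(3)[of "Suc h"] rr by simp
    then have "\<bar>m\<bar> * \<bar>m\<bar>^h dvd m * s' (Suc h) - m * s (Suc h)"
      by (simp only: mod_eq_dvd_iff) simp
    then have "s' (Suc h) mod \<bar>m\<bar>^h = s (Suc h) mod \<bar>m\<bar>^h" by (rule cancel_dvd_m[OF m])
    then show ?thesis using madicD[OF r(2), of h] madicD[OF r'(2), of h] by simp
  qed
  then show ?thesis using rr by auto
qed

definition rs_step :: "int \<Rightarrow> (nat \<Rightarrow> int) \<Rightarrow> (nat \<Rightarrow> int) \<Rightarrow> int \<times> (nat \<Rightarrow> int) \<Rightarrow> bool" where
  "rs_step m \<xi> s' p \<longleftrightarrow> (case p of (r, s) \<Rightarrow> r \<in> {0..\<bar>m\<bar> - 1} \<and> s \<in> madic m \<and>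
      madic_mult m \<xi> s' = madic_add m (madic_mult m (madic_of_int m m) s) (madic_of_int m r))"

lemma rs_step_iff: "rs_step m \<xi> s' (r, s) \<longleftrightarrow> r \<in> {0..\<bar>m\<bar> - 1} \<and> s \<in> madic m \<and>
      (\<forall>h. (m * s h + r) mod \<bar>m\<bar> ^ h = (\<xi> h * s' h) mod \<bar>m\<bar> ^ h)"
proof -
  have "madic_add m (madic_mult m (madic_of_int m m) s) (madic_of_int m r) = (\<lambda>h. (m * s h + r) mod \<bar>m\<bar> ^ h)"
    by (rule ext) (simp add: madic_add_def madic_mult_def madic_of_int_def mod_add_eq mod_mult_left_eq)
  then show ?thesis unfolding rs_step_def by (auto simp: madic_mult_def fun_eq_iff)
qed

lemma rs_step_ex1:
  assumes m: "m \<noteq> 0" and y: "madic_mult m \<xi> s' \<in> madic m"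
  shows "\<exists>!p. rs_step m \<xi> s' p"
proof -
  have yv: "madic_mult m \<xi> s' h = (\<xi> h * s' h) mod \<bar>m\<bar> ^ h" for h by (simp add: madic_mult_def)
  obtain r s where rs: "r \<in> {0..\<bar>m\<bar> - 1}" "s \<in> madic m" "\<And>h. (m * s h + r) mod \<bar>m\<bar> ^ h = madic_mult m \<xi> s' h"
    using madic_divmod_exists[OF m y] by blast
  show ?thesis
  proof (rule ex1I[of _ "(r, s)"])
    show "rs_step m \<xi> s' (r, s)" using rs by (simp add: rs_step_iff yv)
    fix p assume "rs_step m \<xi> s' p"
    then show "p = (r, s)" using madic_divmod_unique[OF m rs] by (cases p) (auto simp: rs_step_iff yv)
  qed
qed

lemma rs_spec:
  assumes m: "m \<noteq> 0" and xi: "\<xi> \<in> madic m"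
  shows "snd (rs m \<xi> i) \<in> madic m \<and> rs_step m \<xi> (snd (rs m \<xi> i)) (rs m \<xi> (Suc i))"
proof (induction i)
  case 0
  have s_madic: "snd (rs m \<xi> 0) \<in> madic m" using madic_of_int_1[OF m] by simp
  have "rs m \<xi> (Suc 0) = (THE p. rs_step m \<xi> (snd (rs m \<xi> 0)) p)"
    by (simp only: rs.simps(2) rs_step_def)
  then show ?case using theI'[OF rs_step_ex1[OF m madic_mult_in[OF xi s_madic]]] s_madic by simp
next
  case (Suc i)
  have s_madic: "snd (rs m \<xi> (Suc i)) \<in> madic m"
    using Suc by (cases "rs m \<xi> (Suc i)") (simp add: rs_step_iff)
  have "rs m \<xi> (Suc (Suc i)) = (THE p. rs_step m \<xi> (snd (rs m \<xi> (Suc i))) p)"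
    by (simp only: rs.simps(2) rs_step_def)
  then show ?case using theI'[OF rs_step_ex1[OF m madic_mult_in[OF xi s_madic]]] s_madic by simp
qed

lemma r_fun_0[simp]: "r_fun m \<xi> 0 = 0" by (simp add: r_fun_def)

section \<open>Integer analogues \<open>r\<^sub>i(q), s\<^sub>i(q)\<close> of the digits\<close>

fun rsq :: "int \<Rightarrow> int \<Rightarrow> nat \<Rightarrow> int \<times> int" where
  "rsq m q 0 = (0, 1)"
| "rsq m q (Suc i) = (let s = snd (rsq m q i); r = (q * s) mod \<bar>m\<bar> in (r, (q * s - r) div m))"

definition sq :: "int \<Rightarrow> int \<Rightarrow> nat \<Rightarrow> int" where "sq m q i = snd (rsq m q i)"
definition rq :: "int \<Rightarrow> int \<Rightarrow> nat \<Rightarrow> int" where "rq m q i = fst (rsq m q i)"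

lemma sq0[simp]: "sq m q 0 = 1" by (simp add: sq_def)
lemma rq_Suc: "rq m q (Suc i) = (q * sq m q i) mod \<bar>m\<bar>" by (simp add: rq_def sq_def Let_def)

lemma sq_Suc: "m \<noteq> 0 \<Longrightarrow> m * sq m q (Suc i) + rq m q (Suc i) = q * sq m q i"
proof -
  assume m: "m \<noteq> 0"
  let ?s = "sq m q i"
  have "m dvd q * ?s - (q * ?s) mod \<bar>m\<bar>" by (simp only: minus_mod_eq_mult_div) simp
  then show ?thesis by (simp add: rq_def sq_def Let_def)
qed

lemma rq_range: "m \<noteq> 0 \<Longrightarrow> 0 \<le> rq m q (Suc i) \<and> rq m q (Suc i) < \<bar>m\<bar>"
  by (simp add: rq_Suc)

lemma rsq_approx:
  assumes m: "m \<noteq> 0" and xi: "\<xi> \<in> madic m" and q: "q mod \<bar>m\<bar> ^ H = \<xi> H"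
  shows "i \<le> H \<Longrightarrow> (\<forall>h. h + i \<le> H \<longrightarrow> snd (rs m \<xi> i) h = sq m q i mod \<bar>m\<bar> ^ h)
          \<and> (1 \<le> i \<longrightarrow> r_fun m \<xi> i = rq m q i)"
proof (induction i)
  case 0 then show ?case by (simp add: madic_of_int_def)
next
  case (Suc i)
  let ?M = "\<lambda>h. \<bar>m\<bar> ^ h"
  have IH: "\<And>h. h + i \<le> H \<Longrightarrow> snd (rs m \<xi> i) h = sq m q i mod ?M h" using Suc by auto
  obtain r s where rs: "rs m \<xi> (Suc i) = (r, s)" by (cases "rs m \<xi> (Suc i)")
  have sp: "r \<in> {0..\<bar>m\<bar> - 1}" "s \<in> madic m"
    "\<And>h. (m * s h + r) mod ?M h = (\<xi> h * snd (rs m \<xi> i) h) mod ?M h"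
    using rs_spec[OF m xi, of i] rs by (auto simp: rs_step_iff)
  have lev: "(m * s h + r) mod ?M h = (q * sq m q i) mod ?M h" if "h + i \<le> H" for h
  proof -
    have "(\<xi> h * snd (rs m \<xi> i) h) mod ?M h = ((q mod ?M h) * (sq m q i mod ?M h)) mod ?M h"
      using approx_mono[OF xi q, of h] IH[OF that] that by simp
    also have "\<dots> = (q * sq m q i) mod ?M h" by (simp add: mod_mult_eq)
    finally show ?thesis using sp(3)[of h] by simp
  qed
  have r: "r = rq m q (Suc i)"
  proof -
    have "r = (m * s 1 + r) mod \<bar>m\<bar>" using sp(1) by (simp add: mod_abs_lin)
    also have "\<dots> = (q * sq m q i) mod \<bar>m\<bar>" using lev[of 1] Suc.prems by simp
    finally show ?thesis by (simp add: rq_Suc)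
  qed
  have "s h = sq m q (Suc i) mod ?M h" if "h + Suc i \<le> H" for h
  proof -
    have "(m * s (Suc h) + r) mod ?M (Suc h) = (q * sq m q i) mod ?M (Suc h)"
      using lev[of "Suc h"] that by simp
    also have "\<dots> = (m * sq m q (Suc i) + r) mod ?M (Suc h)" using sq_Suc[OF m, of q i] r by simp
    finally have "\<bar>m\<bar> * ?M h dvd m * s (Suc h) - m * sq m q (Suc i)"
      by (simp only: mod_eq_dvd_iff) simp
    then have "s (Suc h) mod ?M h = sq m q (Suc i) mod ?M h" by (rule cancel_dvd_m[OF m])
    then show ?thesis using madicD[OF sp(2), of h] by simp
  qed
  then show ?case using rs r by (simp add: r_fun_def)
qed

lemma r_fun_approx:
  assumes "m \<noteq> 0" "\<xi> \<in> madic m" "q mod \<bar>m\<bar> ^ H = \<xi> H" "1 \<le> i" "i \<le> H"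
  shows "r_fun m \<xi> i = rq m q i"
  using rsq_approx[OF assms(1-3) assms(5)] assms(4) by blast

section \<open>Triviality in \<open>BStilde\<close> implies triviality in \<open>BS(m,q)\<close> for \<open>q\<close> near \<open>\<xi>\<close>\<close>

definition a_bpow :: "int \<Rightarrow> gen2 word" where
  "a_bpow x = [(A, True)] @ gpow B x @ [(A, False)]"

lemma a_bpow_add: "word_eq R (a_bpow x @ a_bpow y) (a_bpow (x + y))"
proof -
  have "a_bpow x @ a_bpow y = ([(A, True)] @ gpow B x) @ (A, False) # (A, \<not> False) # (gpow B y @ [(A, False)])"
    by (simp add: a_bpow_def)
  also have "word_eq R \<dots> (([(A, True)] @ gpow B x) @ (gpow B y @ [(A, False)]))" by (rule we_cancel')
  also have "word_eq R \<dots> ([(A, True)] @ (gpow B x @ gpow B y) @ [(A, False)])" by simp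
  also have "word_eq R \<dots> ([(A, True)] @ gpow B (x + y) @ [(A, False)])"
    by (intro we_app we_refl gpow_add)
  finally show ?thesis by (simp add: a_bpow_def)
qed

lemma a_bpow_m: "word_eq {BS_rel m q} (a_bpow m) (gpow B q)"
proof -
  have "word_eq {BS_rel m q} (a_bpow m @ gpow B (- q)) []"
    by (rule we_rel0) (simp add: BS_rel_def a_bpow_def)
  from we_move_r[OF this] show ?thesis by simp
qed

lemma a_bpow_mk: "word_eq {BS_rel m q} (a_bpow (m * k)) (gpow B (q * k))"
proof (induction k rule: int_induct[where k = 0])
  case base
  have "a_bpow 0 = [] @ (A, True) # (A, \<not> True) # []" by (simp add: a_bpow_def)
  also have "word_eq {BS_rel m q} \<dots> ([] @ [])" by (rule we_cancel')
  finally show ?case by simp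
next
  case (step1 i)
  have "word_eq {BS_rel m q} (a_bpow (m * (i + 1))) (a_bpow (m * i) @ a_bpow m)"
    using a_bpow_add[of "{BS_rel m q}" "m * i" m] by (simp add: algebra_simps we_sym)
  also have "word_eq {BS_rel m q} \<dots> (gpow B (q * i) @ gpow B q)" by (intro we_app step1 a_bpow_m)
  also have "word_eq {BS_rel m q} \<dots> (gpow B (q * i + q))" by (rule gpow_add)
  finally show ?case by (simp add: algebra_simps)
next
  case (step2 i)
  have "word_eq {BS_rel m q} (a_bpow (m * (i - 1)) @ a_bpow m) (a_bpow (m * i))"
    using a_bpow_add[of "{BS_rel m q}" "m * (i - 1)" m] by (simp add: algebra_simps)
  also have "word_eq {BS_rel m q} \<dots> (gpow B (q * i))" by (rule step2)
  finally have "word_eq {BS_rel m q} (a_bpow (m * (i - 1))) (gpow B (q * i) @ winv (a_bpow m))"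
    by (rule we_move_r)
  also have "word_eq {BS_rel m q} \<dots> (gpow B (q * i) @ gpow B (- q))"
    using we_winv[OF a_bpow_m[of m q]] by (intro we_app we_refl) simp
  also have "word_eq {BS_rel m q} \<dots> (gpow B (q * i + - q))" by (rule gpow_add)
  finally show ?case by (simp add: algebra_simps)
qed

text \<open>The exponent of \<open>b\<close> representing \<open>b\<^sub>i\<close> (equivalently \<open>e\<^sub>i\<close>) in \<open>BS(m,q)\<close>: \<open>1\<close>, then \<open>q s\<^sub>i\<^sub>-\<^sub>1(q)\<close>.\<close>
fun bexp :: "int \<Rightarrow> int \<Rightarrow> nat \<Rightarrow> int" where
  "bexp m q 0 = 1"
| "bexp m q (Suc i) = q * sq m q i"

lemma bword_pow:
  assumes m: "m \<noteq> 0" and rl: "\<And>j. 1 \<le> j \<Longrightarrow> j \<le> N \<Longrightarrow> r_fun m \<xi> j = rq m q j"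
    and i: "i \<le> N"
  shows "word_eq {BS_rel m q} (bword m \<xi> i) (gpow B (bexp m q i))"
proof -
  have "Suc i \<le> N \<Longrightarrow> word_eq {BS_rel m q} (bword m \<xi> (Suc i)) (gpow B (bexp m q (Suc i)))" for i
  proof (induction i)
    case 0
    show ?case using a_bpow_m[of m q] by (simp add: a_bpow_def)
  next
    case (Suc i)
    then have IH: "word_eq {BS_rel m q} (bword m \<xi> (Suc i)) (gpow B (bexp m q (Suc i)))" by simp
    have r: "r_fun m \<xi> (Suc i) = rq m q (Suc i)" using rl[of "Suc i"] Suc.prems by simp
    have e: "bexp m q (Suc i) + - rq m q (Suc i) = m * sq m q (Suc i)" using sq_Suc[OF m, of q i] by simp
    have "bword m \<xi> (Suc (Suc i)) = [(A, True)] @ bword m \<xi> (Suc i) @ gpow B (- rq m q (Suc i)) @ [(A, False)]"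
      using r by simp
    also have "word_eq {BS_rel m q} \<dots> ([(A, True)] @ gpow B (bexp m q (Suc i)) @ gpow B (- rq m q (Suc i)) @ [(A, False)])"
      by (intro we_app we_refl IH)
    also have "word_eq {BS_rel m q} \<dots> (a_bpow (m * sq m q (Suc i)))"
      unfolding a_bpow_def e[symmetric] by (intro we_app we_refl gpow_add')
    also have "word_eq {BS_rel m q} \<dots> (gpow B (bexp m q (Suc (Suc i))))"
      using a_bpow_mk[of m q "sq m q (Suc i)"] by simp
    finally show ?case .
  qed
  then show ?thesis using i by (cases i) auto
qed

lemma BStilde_rel_in_BS:
  assumes m: "m \<noteq> 0" and rl: "\<And>j. 1 \<le> j \<Longrightarrow> j \<le> N \<Longrightarrow> r_fun m \<xi> j = rq m q j"
    and r: "r \<in> BStilde_rels m \<xi>" and bound: "\<And>i s. (E i, s) \<in> set r \<Longrightarrow> i \<le> N"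
  shows "word_eq {BS_rel m q} (from_tilde m \<xi> r) []"
proof -
  consider (comm) i j where "r = [(E i, True), (E j, True), (E i, False), (E j, False)]"
    | (e1) "r = [(TA, True)] @ gpow (E 0) m @ [(TA, False), (E 1, False)]"
    | (ei) i where "1 \<le> i" "r = [(TA, True), (E i, True)] @ gpow (E 0) (- r_fun m \<xi> i) @ [(TA, False), (E (Suc i), False)]"
    using r unfolding BStilde_rels_def by (simp only: Un_iff mem_Collect_eq singleton_iff) blast
  then show ?thesis
  proof cases
    case (comm i j)
    have ij: "i \<le> N" "j \<le> N" using bound comm by auto
    have "from_tilde m \<xi> r = bword m \<xi> i @ bword m \<xi> j @ winv (bword m \<xi> i) @ winv (bword m \<xi> j)"
      using comm by simp
    also have "word_eq {BS_rel m q} \<dots> (gpow B (bexp m q i) @ gpow B (bexp m q j) @ winv (gpow B (bexp m q i)) @ winv (gpow B (bexp m q j)))"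
      using ij by (intro we_app bword_pow[OF m rl] we_winv)
    also have "word_eq {BS_rel m q} \<dots> []" by (rule comm_pows)
    finally show ?thesis .
  next
    case e1
    then have "from_tilde m \<xi> r = bword m \<xi> 1 @ winv (bword m \<xi> 1)"
      by simp
    then show ?thesis by (simp only: we_inv_r)
  next
    case (ei i)
    obtain i' where i': "i = Suc i'" using ei(1) by (cases i) auto
    have "from_tilde m \<xi> r = bword m \<xi> (Suc i) @ winv (bword m \<xi> (Suc i))"
      using ei i' by simp
    then show ?thesis by (simp only: we_inv_r)
  qed
qed

lemma tilde_trivial_imp_BS_trivial:
  assumes m: "m \<noteq> 0" and xi: "\<xi> \<in> madic m" and w: "w \<in> tilde_kernel m \<xi>"
  shows "\<exists>H. \<forall>q. q mod \<bar>m\<bar> ^ H = \<xi> H \<longrightarrow> w \<in> BS_kernel m q"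
proof -
  have "word_eq (BStilde_rels m \<xi>) (to_tilde w) []" using w by (simp add: tilde_kernel_def)
  then obtain R0 where R0: "R0 \<subseteq> BStilde_rels m \<xi>" "finite R0" "word_eq R0 (to_tilde w) []"
    using we_finite by blast
  define idx where "idx = (\<lambda>p::tgen \<times> bool. case fst p of TA \<Rightarrow> 0 | E i \<Rightarrow> i)"
  have "finite (idx ` (\<Union>r\<in>R0. set r))" using R0(2) by simp
  then obtain N where N: "\<And>k. k \<in> idx ` (\<Union>r\<in>R0. set r) \<Longrightarrow> k \<le> N"
    unfolding finite_nat_set_iff_bounded_le by blast
  have bound: "i \<le> N" if "r \<in> R0" "(E i, s) \<in> set r" for r i s
    using N[of "idx (E i, s)"] that by (force simp: idx_def)
  show ?thesis
  proof (intro exI[of _ "N + 1"] allI impI)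
    fix q assume q: "q mod \<bar>m\<bar> ^ (N + 1) = \<xi> (N + 1)"
    have rl: "\<And>j. 1 \<le> j \<Longrightarrow> j \<le> N \<Longrightarrow> r_fun m \<xi> j = rq m q j"
      using r_fun_approx[OF m xi q] by simp
    have "word_eq {BS_rel m q} (from_tilde m \<xi> (to_tilde w)) (from_tilde m \<xi> [])"
      unfolding from_tilde_def
    proof (rule we_subst[OF R0(3)])
      fix r assume "r \<in> R0"
      then show "word_eq {BS_rel m q} (subst (\<lambda>x. case x of TA \<Rightarrow> [(A, True)] | E i \<Rightarrow> bword m \<xi> i) r) []"
        using BStilde_rel_in_BS[OF m rl, where r=r] R0(1) bound by (auto simp: from_tilde_def)
    qed
    then show "w \<in> BS_kernel m q" by (simp add: BS_kernel_def triv_def)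
  qed
qed

section \<open>Britton normal forms of \<open>BS(m,q)\<close>\<close>

text \<open>A state \<open>(L, z)\<close> with \<open>L = [(c\<^sub>1, \<epsilon>\<^sub>1), \<dots>, (c\<^sub>k, \<epsilon>\<^sub>k)]\<close> stands for
  \<open>b^c\<^sub>1 a^\<epsilon>\<^sub>1 \<cdots> b^c\<^sub>k a^\<epsilon>\<^sub>k b^z\<close>, where \<open>c\<^sub>i\<close> is a coset representative of \<open>\<langle>b^q\<rangle>\<close>
  before \<open>a\<close> and of \<open>\<langle>b^m\<rangle>\<close> before \<open>a\<^sup>-\<^sup>1\<close>, and no pinch \<open>a b^0 a\<^sup>-\<^sup>1\<close> occurs.  Right
  multiplication by the generators acts on these states; since the relator acts trivially,
  a word trivial in \<open>BS(m,q)\<close> fixes the empty state.\<close>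

text \<open>The symmetric residue of \<open>z\<close> modulo \<open>q\<close>; for \<open>|q|\<close> large it fixes small integers,
  which is what lets the normal forms of \<open>BStilde\<close> and \<open>BS(m,q)\<close> match.\<close>
definition symres :: "int \<Rightarrow> int \<Rightarrow> int" where
  "symres q z = (z + \<bar>q\<bar> div 2) mod \<bar>q\<bar> - \<bar>q\<bar> div 2"

lemma symres_dvd: "q dvd z - symres q z"
proof -
  have "z - symres q z = (z + \<bar>q\<bar> div 2) - (z + \<bar>q\<bar> div 2) mod \<bar>q\<bar>" by (simp add: symres_def)
  also have "\<dots> = \<bar>q\<bar> * ((z + \<bar>q\<bar> div 2) div \<bar>q\<bar>)" by (rule minus_mod_eq_mult_div)
  finally show ?thesis by simp
qed

lemma symres_shift: "symres q (z + q * j) = symres q z"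
proof -
  have "(z + q * j + \<bar>q\<bar> div 2) mod \<bar>q\<bar> = (z + \<bar>q\<bar> div 2) mod \<bar>q\<bar>"
  proof -
    have "\<bar>q\<bar> dvd (z + q * j + \<bar>q\<bar> div 2) - (z + \<bar>q\<bar> div 2)" by simp
    then show ?thesis by (simp only: mod_eq_dvd_iff)
  qed
  then show ?thesis by (simp add: symres_def)
qed

lemma symres_split: "q \<noteq> 0 \<Longrightarrow> z = symres q z + q * ((z - symres q z) div q)"
  using symres_dvd[of q z] by simp

lemma symres_idem: "symres q (symres q z) = symres q z"
proof -
  obtain k where k: "z - symres q z = q * k" using symres_dvd[of q z] by (auto elim: dvdE)
  have "symres q z = z + q * (- k)" using k by simp
  then have "symres q (symres q z) = symres q (z + q * (- k))" by simp
  also have "\<dots> = symres q z" by (rule symres_shift)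
  finally show ?thesis .
qed

lemma symres_small: "2 * \<bar>k\<bar> < \<bar>q\<bar> \<Longrightarrow> symres q k = k"
proof -
  assume a: "2 * \<bar>k\<bar> < \<bar>q\<bar>"
  have "0 \<le> k + \<bar>q\<bar> div 2" "k + \<bar>q\<bar> div 2 < \<bar>q\<bar>" using a by linarith+
  then show ?thesis by (simp add: symres_def)
qed

lemma symres_0: "q \<noteq> 0 \<Longrightarrow> symres q 0 = 0"
  by (rule symres_small) simp

text \<open>Right multiplication by a letter: \<open>b^z a = b^c a b^(m j)\<close> for \<open>z = c + q j\<close>, and \<open>b^z a\<^sup>-\<^sup>1 = b^c a\<^sup>-\<^sup>1 b^(q j)\<close> for \<open>z = c + m j\<close>, cancelling a pinch when one appears.\<close>
fun stepB :: "int \<Rightarrow> int \<Rightarrow> gen2 \<times> bool \<Rightarrow> (int \<times> bool) list \<times> int \<Rightarrow> (int \<times> bool) list \<times> int" where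
  "stepB m q (B, True) (L, z) = (L, z + 1)"
| "stepB m q (B, False) (L, z) = (L, z - 1)"
| "stepB m q (A, True) (L, z) = (let c = symres q z; j = (z - c) div q in
      if c = 0 \<and> L \<noteq> [] \<and> \<not> snd (last L) then (butlast L, fst (last L) + m * j) else (L @ [(c, True)], m * j))"
| "stepB m q (A, False) (L, z) = (let c = z mod \<bar>m\<bar>; j = (z - c) div m in
      if c = 0 \<and> L \<noteq> [] \<and> snd (last L) then (butlast L, fst (last L) + q * j) else (L @ [(c, False)], q * j))"

definition actB :: "int \<Rightarrow> int \<Rightarrow> gen2 word \<Rightarrow> (int \<times> bool) list \<times> int \<Rightarrow> (int \<times> bool) list \<times> int" where
  "actB m q w s = fold (stepB m q) w s"

lemma actB_simps[simp]: "actB m q [] s = s" "actB m q (x # w) s = actB m q w (stepB m q x s)"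
  "actB m q (u @ v) s = actB m q v (actB m q u s)"
  by (simp_all add: actB_def)

definition digit_ok :: "int \<Rightarrow> int \<Rightarrow> int \<times> bool \<Rightarrow> bool" where
  "digit_ok m q p = (if snd p then symres q (fst p) = fst p else fst p mod \<bar>m\<bar> = fst p)"

definition no_pinch :: "int \<times> bool \<Rightarrow> int \<times> bool \<Rightarrow> bool" where
  "no_pinch p1 p2 = (snd p1 \<noteq> snd p2 \<longrightarrow> fst p2 \<noteq> 0)"

definition validB :: "int \<Rightarrow> int \<Rightarrow> (int \<times> bool) list \<times> int \<Rightarrow> bool" where
  "validB m q s = ((\<forall>p \<in> set (fst s). digit_ok m q p) \<and> successively no_pinch (fst s))"

lemma validB_snoc: "validB m q (L @ [p], z) \<longleftrightarrow> validB m q (L, z') \<and> digit_ok m q p \<and> (L \<noteq> [] \<longrightarrow> no_pinch (last L) p)"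
  by (auto simp: validB_def successively_append_iff)

lemma actB_gpow: "actB m q (gpow B k) (L, z) = (L, z + k)"
proof -
  have 1: "actB m q (replicate n (B, True)) (L, z) = (L, z + int n)" for n z
    by (induction n arbitrary: z) (simp_all add: algebra_simps)
  have 2: "actB m q (replicate n (B, False)) (L, z) = (L, z - int n)" for n z
    by (induction n arbitrary: z) (simp_all add: algebra_simps)
  show ?thesis by (simp add: gpow_def 1 2)
qed

lemma modm_lin: fixes m c j :: int shows "m \<noteq> 0 \<Longrightarrow> (c + m * j) mod \<bar>m\<bar> = c mod \<bar>m\<bar>"
proof -
  have "\<bar>m\<bar> dvd (c + m * j) - c" by simp
  then show "(c + m * j) mod \<bar>m\<bar> = c mod \<bar>m\<bar>" by (simp only: mod_eq_dvd_iff)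
qed

lemma modm_split: fixes m z :: int shows "m \<noteq> 0 \<Longrightarrow> z = z mod \<bar>m\<bar> + m * ((z - z mod \<bar>m\<bar>) div m)"
proof -
  assume m: "m \<noteq> 0"
  have "m dvd z - z mod \<bar>m\<bar>" by (simp only: minus_mod_eq_mult_div) simp
  then show ?thesis by simp
qed

context
  fixes m q :: int
  assumes m: "m \<noteq> 0" and q: "q \<noteq> 0"
begin

lemma stepA_cases:
  fixes L z
  defines "c \<equiv> symres q z" and "j \<equiv> (z - symres q z) div q"
  shows "z = c + q * j"
    "c = 0 \<and> L \<noteq> [] \<and> \<not> snd (last L) \<Longrightarrow> stepB m q (A, True) (L, z) = (butlast L, fst (last L) + m * j)"
    "\<not> (c = 0 \<and> L \<noteq> [] \<and> \<not> snd (last L)) \<Longrightarrow> stepB m q (A, True) (L, z) = (L @ [(c, True)], m * j)"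
  using symres_split[OF q, of z] by (auto simp: c_def j_def Let_def)

lemma stepAi_cases:
  fixes L z
  defines "c \<equiv> z mod \<bar>m\<bar>" and "j \<equiv> (z - z mod \<bar>m\<bar>) div m"
  shows "z = c + m * j"
    "c = 0 \<and> L \<noteq> [] \<and> snd (last L) \<Longrightarrow> stepB m q (A, False) (L, z) = (butlast L, fst (last L) + q * j)"
    "\<not> (c = 0 \<and> L \<noteq> [] \<and> snd (last L)) \<Longrightarrow> stepB m q (A, False) (L, z) = (L @ [(c, False)], q * j)"
  using modm_split[OF m, of z] by (auto simp: c_def j_def Let_def)

lemma stepAi_mj: "stepB m q (A, False) (L, c + m * j) =
   (if c mod \<bar>m\<bar> = 0 \<and> L \<noteq> [] \<and> snd (last L) then (butlast L, fst (last L) + q * ((c + m * j - c mod \<bar>m\<bar>) div m))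
    else (L @ [(c mod \<bar>m\<bar>, False)], q * ((c + m * j - c mod \<bar>m\<bar>) div m)))"
  using modm_lin[OF m, of c j] by (simp add: Let_def)

lemma stepA_qj: "symres q c = c \<Longrightarrow> stepB m q (A, True) (L, c + q * j) =
   (if c = 0 \<and> L \<noteq> [] \<and> \<not> snd (last L) then (butlast L, fst (last L) + m * j)
    else (L @ [(c, True)], m * j))"
  using symres_shift[of q c j] q by (simp add: Let_def)

lemma stepAi_ok: "c mod \<bar>m\<bar> = c \<Longrightarrow> \<not> (c = 0 \<and> L \<noteq> [] \<and> snd (last L)) \<Longrightarrow>
   stepB m q (A, False) (L, c + m * j) = (L @ [(c, False)], q * j)"
  using stepAi_mj[where c=c and L=L and j=j] m by auto

lemma stepAi_0: "L \<noteq> [] \<Longrightarrow> snd (last L) \<Longrightarrow> stepB m q (A, False) (L, m * j) = (butlast L, fst (last L) + q * j)"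
  using stepAi_mj[where c=0 and L=L and j=j] m by auto

lemma stepA_ok: "symres q c = c \<Longrightarrow> \<not> (c = 0 \<and> L \<noteq> [] \<and> \<not> snd (last L)) \<Longrightarrow>
   stepB m q (A, True) (L, c + q * j) = (L @ [(c, True)], m * j)"
  using stepA_qj[where c=c and L=L and j=j] by auto

lemma stepA_0: "L \<noteq> [] \<Longrightarrow> \<not> snd (last L) \<Longrightarrow> stepB m q (A, True) (L, q * j) = (butlast L, fst (last L) + m * j)"
  using stepA_qj[where c=0 and L=L and j=j] symres_0[OF q] by auto

declare stepB.simps(3,4)[simp del]

lemma stepB_a_ainv:
  assumes v: "validB m q (L, z)"
  shows "stepB m q (A, False) (stepB m q (A, True) (L, z)) = (L, z)"
proof -
  define c where "c = symres q z"
  define j where "j = (z - symres q z) div q"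
  have z: "z = c + q * j" using stepA_cases(1)[of z] by (simp add: c_def j_def)
  show ?thesis
  proof (cases "c = 0 \<and> L \<noteq> [] \<and> \<not> snd (last L)")
    case True
    then obtain L' c' where L: "L = L' @ [(c', False)]"
      by (metis append_butlast_last_id prod.collapse)
    have s1: "stepB m q (A, True) (L, z) = (L', c' + m * j)"
      using stepA_cases(2)[of z L] True L by (simp add: c_def j_def)
    have ok: "c' mod \<bar>m\<bar> = c'" and np: "L' \<noteq> [] \<longrightarrow> no_pinch (last L') (c', False)"
      using v L validB_snoc[of m q L' "(c', False)" z z] by (auto simp: digit_ok_def)
    have "\<not> (c' = 0 \<and> L' \<noteq> [] \<and> snd (last L'))" using np by (auto simp: no_pinch_def)
    then have "stepB m q (A, False) (L', c' + m * j) = (L' @ [(c', False)], q * j)" by (rule stepAi_ok[OF ok])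
    then show ?thesis using s1 L z True by simp
  next
    case False
    have s1: "stepB m q (A, True) (L, z) = (L @ [(c, True)], m * j)"
      using stepA_cases(3)[of z L] False by (simp add: c_def j_def)
    have "stepB m q (A, False) (L @ [(c, True)], m * j) = (L, c + q * j)"
      using stepAi_0[where L="L @ [(c, True)]" and j=j] by simp
    then show ?thesis using s1 z by simp
  qed
qed

lemma stepB_ainv_a:
  assumes v: "validB m q (L, z)"
  shows "stepB m q (A, True) (stepB m q (A, False) (L, z)) = (L, z)"
proof -
  define c where "c = z mod \<bar>m\<bar>"
  define j where "j = (z - z mod \<bar>m\<bar>) div m"
  have z: "z = c + m * j" using stepAi_cases(1)[of z] by (simp add: c_def j_def)
  show ?thesis
  proof (cases "c = 0 \<and> L \<noteq> [] \<and> snd (last L)")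
    case True
    then obtain L' c' where L: "L = L' @ [(c', True)]"
      by (metis append_butlast_last_id prod.collapse)
    have s1: "stepB m q (A, False) (L, z) = (L', c' + q * j)"
      using stepAi_cases(2)[of z L] True L by (simp add: c_def j_def)
    have ok: "symres q c' = c'" and np: "L' \<noteq> [] \<longrightarrow> no_pinch (last L') (c', True)"
      using v L validB_snoc[of m q L' "(c', True)" z z] by (auto simp: digit_ok_def)
    have "\<not> (c' = 0 \<and> L' \<noteq> [] \<and> \<not> snd (last L'))" using np by (auto simp: no_pinch_def)
    then have "stepB m q (A, True) (L', c' + q * j) = (L' @ [(c', True)], m * j)" by (rule stepA_ok[OF ok])
    then show ?thesis using s1 L z True by simp
  next
    case False
    have s1: "stepB m q (A, False) (L, z) = (L @ [(c, False)], q * j)"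
      using stepAi_cases(3)[of z L] False by (simp add: c_def j_def)
    have "stepB m q (A, True) (L @ [(c, False)], q * j) = (L, c + m * j)"
      using stepA_0[where L="L @ [(c, False)]" and j=j] by simp
    then show ?thesis using s1 z by simp
  qed
qed

lemma stepB_valid:
  assumes v: "validB m q s"
  shows "validB m q (stepB m q x s)"
proof -
  obtain L z where s: "s = (L, z)" by (cases s)
  obtain g e where x: "x = (g, e)" by (cases x)
  have vb: "validB m q (butlast L, z')" if "L \<noteq> []" for z'
  proof -
    have "L = butlast L @ [last L]" using that by simp
    then show ?thesis using v s validB_snoc[of m q "butlast L" "last L" z z'] by metis
  qed
  have vL: "validB m q (L, z')" for z' using v s by (simp add: validB_def)
  show ?thesis
  proof (cases g)
    case B then show ?thesis using v s x by (cases e) (simp_all add: validB_def)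
  next
    case A
    show ?thesis
    proof (cases e)
      case True
      let ?c = "symres q z"
      show ?thesis
      proof (cases "?c = 0 \<and> L \<noteq> [] \<and> \<not> snd (last L)")
        case c: True
        then show ?thesis using stepA_cases(2)[of z L] vb x s A True by simp
      next
        case c: False
        have "validB m q (L @ [(?c, True)], m * ((z - symres q z) div q))"
          using c vL validB_snoc[of m q L "(?c, True)" _ z] by (auto simp: digit_ok_def symres_idem no_pinch_def)
        then show ?thesis using stepA_cases(3)[of z L] c x s A True by simp
      qed
    next
      case False
      let ?c = "z mod \<bar>m\<bar>"
      show ?thesis
      proof (cases "?c = 0 \<and> L \<noteq> [] \<and> snd (last L)")
        case c: True
        then show ?thesis using stepAi_cases(2)[of z L] vb x s A False by simp
      next
        case c: False
        have "validB m q (L @ [(?c, False)], q * ((z - z mod \<bar>m\<bar>) div m))"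
          using c vL validB_snoc[of m q L "(?c, False)" _ z] by (auto simp: digit_ok_def no_pinch_def)
        then show ?thesis using stepAi_cases(3)[of z L] c x s A False by simp
      qed
    qed
  qed
qed

lemma actB_valid: "validB m q s \<Longrightarrow> validB m q (actB m q w s)"
proof (induction w arbitrary: s)
  case Nil then show ?case by simp
next
  case (Cons x w)
  have "validB m q (stepB m q x s)" by (rule stepB_valid[OF Cons.prems])
  then show ?case by (simp add: Cons.IH)
qed

lemma stepB_letter_inverse:
  assumes "validB m q s"
  shows "stepB m q (x, \<not> e) (stepB m q (x, e) s) = s"
proof -
  obtain L z where s: "s = (L, z)" by (cases s)
  show ?thesis using assms s stepB_a_ainv[of L z] stepB_ainv_a[of L z] by (cases x; cases e) auto
qed

lemma actB_relator:
  assumes v: "validB m q (L, z)"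
  shows "actB m q (BS_rel m q) (L, z) = (L, z)"
proof -
  define c where "c = symres q z"
  define j where "j = (z - symres q z) div q"
  have z: "z = c + q * j" using stepA_cases(1)[of z] by (simp add: c_def j_def)
  have BR: "BS_rel m q = [(A, True)] @ gpow B m @ [(A, False)] @ gpow B (- q)" by (simp add: BS_rel_def)
  show ?thesis
  proof (cases "c = 0 \<and> L \<noteq> [] \<and> \<not> snd (last L)")
    case True
    then obtain L' c' where L: "L = L' @ [(c', False)]"
      by (metis append_butlast_last_id prod.collapse)
    have s1: "stepB m q (A, True) (L, z) = (L', c' + m * j)"
      using stepA_cases(2)[of z L] True L by (simp add: c_def j_def)
    have ok: "c' mod \<bar>m\<bar> = c'" and np: "L' \<noteq> [] \<longrightarrow> no_pinch (last L') (c', False)"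
      using v L validB_snoc[of m q L' "(c', False)" z z] by (auto simp: digit_ok_def)
    have nc: "\<not> (c' = 0 \<and> L' \<noteq> [] \<and> snd (last L'))" using np by (auto simp: no_pinch_def)
    have s2: "stepB m q (A, False) (L', c' + m * (j + 1)) = (L' @ [(c', False)], q * (j + 1))"
      by (rule stepAi_ok[OF ok nc])
    have "actB m q (BS_rel m q) (L, z) = actB m q (gpow B (- q)) (stepB m q (A, False) (L', c' + m * j + m))"
      unfolding BR using s1 by (simp add: actB_gpow)
    also have "c' + m * j + m = c' + m * (j + 1)" by (simp add: algebra_simps)
    finally show ?thesis using s2 L z True by (simp add: actB_gpow algebra_simps)
  next
    case False
    have s1: "stepB m q (A, True) (L, z) = (L @ [(c, True)], m * j)"
      using stepA_cases(3)[of z L] False by (simp add: c_def j_def)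
    have s2: "stepB m q (A, False) (L @ [(c, True)], 0 + m * (j + 1)) = (L, c + q * (j + 1))"
      using stepAi_0[where L="L @ [(c, True)]" and j="j + 1"] by simp
    have "actB m q (BS_rel m q) (L, z) = actB m q (gpow B (- q)) (stepB m q (A, False) (L @ [(c, True)], m * j + m))"
      unfolding BR using s1 by (simp add: actB_gpow)
    also have "m * j + m = 0 + m * (j + 1)" by (simp add: algebra_simps)
    finally show ?thesis using s2 z by (simp add: actB_gpow algebra_simps)
  qed
qed

lemma actB_word_eq: "word_eq {BS_rel m q} u v \<Longrightarrow> validB m q s \<Longrightarrow> actB m q u s = actB m q v s"
proof (induction arbitrary: s rule: word_eq.induct)
  case (refl w) then show ?case by simp
next
  case (sym u v) then show ?case by simp
next
  case (trans u v w) then show ?case by simp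
next
  case (cancel u x e v)
  have "validB m q (actB m q u s)" using cancel actB_valid by blast
  then show ?case using stepB_letter_inverse by simp
next
  case (rel r u v)
  obtain L z where "actB m q u s = (L, z)" by (cases "actB m q u s")
  moreover have "validB m q (L, z)" using rel actB_valid calculation by metis
  ultimately show ?case using rel actB_relator by simp
qed

lemma actB_kernel: "w \<in> BS_kernel m q \<Longrightarrow> actB m q w ([], 0) = ([], 0)"
proof -
  assume "w \<in> BS_kernel m q"
  then have "word_eq {BS_rel m q} w []" by (simp add: BS_kernel_def triv_def)
  moreover have "validB m q ([], 0)" by (simp add: validB_def)
  ultimately show ?thesis using actB_word_eq by fastforce
qed

end

section \<open>The abelian subgroup \<open>E\<close> of \<open>BStilde\<close> and conjugation by \<open>a\<close>\<close>

lemma comm_EE: "word_eq (BStilde_rels m \<xi>) [(E i, s), (E j, t)] [(E j, t), (E i, s)]"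
proof -
  let ?R = "BStilde_rels m \<xi>"
  have pos: "word_eq ?R [(E i', True), (E j', True)] [(E j', True), (E i', True)]" for i' j'
  proof -
    have "word_eq ?R ([(E i', True), (E j', True)] @ [(E i', False), (E j', False)]) []"
      by (rule we_rel0) (auto simp: BStilde_rels_def)
    from we_move_r[OF this] show ?thesis by (simp add: winv_def)
  qed
  have a: "word_eq ?R ([(E i, True)] @ [(E j, True)]) ([(E j, True)] @ [(E i, True)])" using pos by simp
  show ?thesis
  proof (cases s; cases t)
    assume "s" "t" then show ?thesis using pos by simp
  next
    assume "s" "\<not> t" then show ?thesis using comm_inv_r[OF a] by (simp add: winv_def)
  next
    assume "\<not> s" "t" then show ?thesis using comm_inv_l[OF a] by (simp add: winv_def)
  next
    assume "\<not> s" "\<not> t"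
    have a2: "word_eq ?R ([(E i, True)] @ [(E j, False)]) ([(E j, False)] @ [(E i, True)])"
      using comm_inv_r[OF a] by (simp add: winv_def)
    show ?thesis using comm_inv_l[OF a2] \<open>\<not> s\<close> \<open>\<not> t\<close> by (simp add: winv_def)
  qed
qed

definition Eword :: "tgen word \<Rightarrow> bool" where
  "Eword w = (\<forall>p \<in> set w. \<exists>i. fst p = E i)"

lemma Eword_simps[simp]: "Eword []" "Eword (u @ v) \<longleftrightarrow> Eword u \<and> Eword v"
  "Eword (p # w) \<longleftrightarrow> (\<exists>i. fst p = E i) \<and> Eword w"
  by (auto simp: Eword_def)

lemma Eword_gpow[simp]: "Eword (gpow (E i) k)"
  by (auto simp: Eword_def gpow_def)

lemma Eword_letter_comm:
  assumes "Eword v"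
  shows "word_eq (BStilde_rels m \<xi>) ([(E i, s)] @ v) (v @ [(E i, s)])"
  using assms
proof (induction v)
  case Nil then show ?case by simp
next
  case (Cons p v)
  obtain j t where p: "p = (E j, t)" using Cons.prems by (cases p) auto
  have ih: "word_eq (BStilde_rels m \<xi>) ([(E i, s)] @ v) (v @ [(E i, s)])" using Cons.IH Cons.prems by simp
  have 1: "word_eq (BStilde_rels m \<xi>) ([(E i, s), (E j, t)] @ v) ([(E j, t), (E i, s)] @ v)"
    by (rule we_app[OF comm_EE we_refl])
  have 2: "word_eq (BStilde_rels m \<xi>) ([(E j, t)] @ ([(E i, s)] @ v)) ([(E j, t)] @ (v @ [(E i, s)]))"
    by (rule we_app[OF we_refl ih])
  show ?case using we_trans[OF 1[simplified] 2[simplified]] p by simp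
qed

lemma Eword_comm:
  assumes "Eword u" "Eword v"
  shows "word_eq (BStilde_rels m \<xi>) (u @ v) (v @ u)"
  using assms(1)
proof (induction u)
  case Nil then show ?case by simp
next
  case (Cons p u)
  obtain i s where p: "p = (E i, s)" using Cons.prems by (cases p) auto
  have ih: "word_eq (BStilde_rels m \<xi>) (u @ v) (v @ u)" using Cons.IH Cons.prems by simp
  have "word_eq (BStilde_rels m \<xi>) ([(E i, s)] @ (u @ v)) ([(E i, s)] @ (v @ u))"
    by (rule we_app[OF we_refl ih])
  also have "word_eq (BStilde_rels m \<xi>) ([(E i, s)] @ (v @ u)) (([(E i, s)] @ v) @ u)" by simp
  also have "word_eq (BStilde_rels m \<xi>) \<dots> ((v @ [(E i, s)]) @ u)"
    by (intro we_app Eword_letter_comm assms(2) we_refl)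
  finally show ?case using p by simp
qed

definition evalE :: "(nat \<Rightarrow> int) \<Rightarrow> nat \<Rightarrow> tgen word" where
  "evalE z n = concat (map (\<lambda>i. gpow (E i) (z i)) [0..<n])"

lemma evalE_0[simp]: "evalE z 0 = []" by (simp add: evalE_def)
lemma evalE_Suc: "evalE z (Suc n) = evalE z n @ gpow (E n) (z n)" by (simp add: evalE_def)
lemma Eword_evalE[simp]: "Eword (evalE z n)" by (induction n) (simp_all add: evalE_Suc)

lemma evalE_cong: "(\<And>i. i < n \<Longrightarrow> z i = z' i) \<Longrightarrow> evalE z n = evalE z' n"
  unfolding evalE_def by (rule arg_cong[where f=concat]) (rule map_cong, auto)

definition supp :: "(nat \<Rightarrow> int) \<Rightarrow> nat \<Rightarrow> bool" where
  "supp z n = (\<forall>i \<ge> n. z i = 0)"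

lemma evalE_ext: assumes "supp z n" "n \<le> n'" shows "evalE z n' = evalE z n"
  using assms(2)
proof (induction n' rule: dec_induct)
  case base then show ?case by simp
next
  case (step k) then show ?case using assms(1) by (simp add: evalE_Suc supp_def)
qed

lemma evalE_zero: "(\<And>i. i < n \<Longrightarrow> z i = 0) \<Longrightarrow> evalE z n = []"
proof -
  assume "\<And>i. i < n \<Longrightarrow> z i = 0"
  then have "evalE z n = evalE (\<lambda>_. 0) n" by (rule evalE_cong)
  also have "\<dots> = []" by (induction n) (simp_all add: evalE_Suc)
  finally show ?thesis .
qed

lemma evalE_split0: "1 \<le> n \<Longrightarrow> evalE z n = gpow (E 0) (z 0) @ evalE (z(0 := 0)) n"
proof (induction n rule: dec_induct)
  case base then show ?case by (simp add: evalE_Suc)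
next
  case (step k) then show ?case by (simp add: evalE_Suc)
qed

lemma evalE_add: "word_eq (BStilde_rels m \<xi>) (evalE (\<lambda>i. x i + y i) n) (evalE x n @ evalE y n)"
proof (induction n)
  case 0 then show ?case by simp
next
  case (Suc n)
  let ?R = "BStilde_rels m \<xi>"
  have "word_eq ?R (evalE (\<lambda>i. x i + y i) n @ gpow (E n) (x n + y n))
     ((evalE x n @ evalE y n) @ (gpow (E n) (x n) @ gpow (E n) (y n)))"
    by (intro we_app Suc we_sym[OF gpow_add])
  also have "word_eq ?R ((evalE x n @ evalE y n) @ (gpow (E n) (x n) @ gpow (E n) (y n)))
      (evalE x n @ (evalE y n @ gpow (E n) (x n)) @ gpow (E n) (y n))" by simp
  also have "word_eq ?R \<dots> (evalE x n @ (gpow (E n) (x n) @ evalE y n) @ gpow (E n) (y n))"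
    by (rule we_app[OF we_refl we_app[OF Eword_comm we_refl]]) simp_all
  finally show ?case by (simp add: evalE_Suc)
qed

definition conj_a :: "tgen word \<Rightarrow> tgen word" where
  "conj_a u = [(TA, True)] @ u @ [(TA, False)]"

lemma conj_a_app: "word_eq R (conj_a (u @ v)) (conj_a u @ conj_a v)"
proof -
  have c: "word_eq R (((TA, True) # u) @ (TA, False) # (TA, \<not> False) # (v @ [(TA, False)]))
     (((TA, True) # u) @ (v @ [(TA, False)]))" by (rule we_cancel')
  from we_sym[OF c] show ?thesis by (simp add: conj_a_def)
qed

lemma conj_a_cong: "word_eq R u v \<Longrightarrow> word_eq R (conj_a u) (conj_a v)"
  unfolding conj_a_def by (intro we_app we_refl)

lemma conj_hom:
  assumes step: "\<And>a. word_eq R (W (a + 1)) (W a @ W 1)" and z: "word_eq R (W 0) []"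
    and one: "word_eq R (conj_a (W 1)) (gpow h k)"
  shows "word_eq R (conj_a (W a)) (gpow h (k * a))"
proof (induction a rule: int_induct[where k = 0])
  case base
  have "word_eq R (conj_a (W 0)) (conj_a [])" by (rule conj_a_cong[OF z])
  also have "conj_a [] = [] @ (TA, True) # (TA, \<not> True) # []" by (simp add: conj_a_def)
  also have "word_eq R \<dots> ([] @ [])" by (rule we_cancel')
  finally show ?case by simp
next
  case (step1 i)
  have "word_eq R (conj_a (W (i + 1))) (conj_a (W i @ W 1))" by (rule conj_a_cong[OF step])
  also have "word_eq R \<dots> (conj_a (W i) @ conj_a (W 1))" by (rule conj_a_app)
  also have "word_eq R \<dots> (gpow h (k * i) @ gpow h k)" by (intro we_app step1 one)
  also have "word_eq R \<dots> (gpow h (k * i + k))" by (rule gpow_add)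
  finally show ?case by (simp add: algebra_simps)
next
  case (step2 i)
  have "word_eq R (conj_a (W (i - 1)) @ conj_a (W 1)) (conj_a (W (i - 1) @ W 1))" by (rule we_sym[OF conj_a_app])
  also have "word_eq R \<dots> (conj_a (W i))" using conj_a_cong[OF step[of "i - 1"]] by (simp add: we_sym)
  also have "word_eq R \<dots> (gpow h (k * i))" by (rule step2)
  finally have "word_eq R (conj_a (W (i - 1))) (gpow h (k * i) @ winv (conj_a (W 1)))" by (rule we_move_r)
  also have "word_eq R \<dots> (gpow h (k * i) @ gpow h (- k))"
    using we_winv[OF one] by (intro we_app we_refl) simp
  also have "word_eq R \<dots> (gpow h (k * i + - k))" by (rule gpow_add)
  finally show ?case by (simp add: algebra_simps)
qed

lemma conj_a_Ei_block:
  assumes n: "1 \<le> n"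
  shows "word_eq (BStilde_rels m \<xi>) (conj_a (gpow (E n) a @ gpow (E 0) (- (a * r_fun m \<xi> n))))
    (gpow (E (Suc n)) a)"
proof -
  let ?R = "BStilde_rels m \<xi>" and ?r = "r_fun m \<xi> n"
  define W where "W a' = gpow (E n) a' @ gpow (E 0) (- (a' * ?r))" for a'
  have Wstep: "word_eq ?R (W (a' + 1)) (W a' @ W 1)" for a'
  proof -
    have "word_eq ?R (W (a' + 1)) ((gpow (E n) a' @ gpow (E n) 1) @ (gpow (E 0) (- (a' * ?r)) @ gpow (E 0) (- ?r)))"
      unfolding W_def
      by (intro we_app; rule we_sym, rule we_trans[OF gpow_add]) (simp_all add: algebra_simps)
    also have "word_eq ?R \<dots> (gpow (E n) a' @ (gpow (E n) 1 @ gpow (E 0) (- (a' * ?r))) @ gpow (E 0) (- ?r))"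
      by simp
    also have "word_eq ?R \<dots> (gpow (E n) a' @ (gpow (E 0) (- (a' * ?r)) @ gpow (E n) 1) @ gpow (E 0) (- ?r))"
      by (rule we_app[OF we_refl we_app[OF Eword_comm we_refl]]) simp_all
    finally show ?thesis by (simp add: W_def)
  qed
  have W1: "word_eq ?R (conj_a (W 1)) (gpow (E (Suc n)) 1)"
    using rel_Ei[OF n, of m \<xi>] by (simp add: W_def conj_a_def)
  show ?thesis using conj_hom[OF Wstep _ W1, of a] by (simp add: W_def)
qed

lemma conj_a_E0_block:
  "word_eq (BStilde_rels m \<xi>) (conj_a (gpow (E 0) (m * d))) (gpow (E 1) d)"
proof -
  let ?R = "BStilde_rels m \<xi>"
  have W1: "word_eq ?R (gpow (E 0) (m * (a + 1))) (gpow (E 0) (m * a) @ gpow (E 0) (m * 1))" for a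
    using we_sym[OF gpow_add[of ?R "E 0" "m * a" m]] by (simp add: algebra_simps)
  have one: "word_eq ?R (conj_a (gpow (E 0) (m * 1))) (gpow (E 1) 1)"
    using rel_E1[of m \<xi>] by (simp add: conj_a_def)
  show ?thesis using conj_hom[where W = "\<lambda>a. gpow (E 0) (m * a)", OF W1 _ one, of d] by simp
qed

text \<open>The element \<open>x = \<Sum>\<^sub>i\<^sub><\<^sub>n x\<^sub>i e\<^sub>i\<close> lies in \<open>E\<^sub>m\<^sub>,\<^sub>\<xi>\<close> iff \<open>m\<close> divides \<open>phi_num\<close>, the coefficient of
  \<open>e\<^sub>0\<close> after writing \<open>x\<close> in the basis \<open>e\<^sub>0, e\<^sub>i - r\<^sub>i e\<^sub>0\<close>; then \<open>\<phi>(x)\<close> has the coordinates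
  \<open>phi_coords\<close> (shift by one, with \<open>phi_num / m\<close> at \<open>e\<^sub>1\<close>).\<close>
definition phi_num :: "int \<Rightarrow> (nat \<Rightarrow> int) \<Rightarrow> nat \<Rightarrow> (nat \<Rightarrow> int) \<Rightarrow> int" where
  "phi_num m \<xi> n x = x 0 + (\<Sum>i<n. x i * r_fun m \<xi> i)"

definition phi_coords :: "int \<Rightarrow> (nat \<Rightarrow> int) \<Rightarrow> nat \<Rightarrow> (nat \<Rightarrow> int) \<Rightarrow> (nat \<Rightarrow> int)" where
  "phi_coords m \<xi> n x = (\<lambda>i. if i = 0 then 0 else if i = 1 then phi_num m \<xi> n x div m else x (i - 1))"

lemma phi_coords_0[simp]: "phi_coords m \<xi> n z 0 = 0" by (simp add: phi_coords_def)

lemma evalE_peel: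
  fixes m :: int and \<xi> :: "nat \<Rightarrow> int"
  assumes n: "1 \<le> n" and sx: "supp x (Suc n)"
  defines "y \<equiv> (x(n := 0))(0 := x 0 + x n * r_fun m \<xi> n)"
  shows "supp y n" and "phi_num m \<xi> n y = phi_num m \<xi> (Suc n) x"
    and "word_eq (BStilde_rels m \<xi>) (evalE x (Suc n))
      (evalE y n @ (gpow (E n) (x n) @ gpow (E 0) (- (x n * r_fun m \<xi> n))))"
proof -
  let ?R = "BStilde_rels m \<xi>" and ?r = "r_fun m \<xi> n" and ?a = "x n"
  define v where "v = (\<lambda>i. if i = n then ?a else if i = 0 then - (?a * ?r) else 0)"
  have n0: "n \<noteq> 0" using n by simp
  show suppy: "supp y n" using sx n0 by (auto simp: supp_def y_def)
  show "phi_num m \<xi> n y = phi_num m \<xi> (Suc n) x"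
  proof -
    have "(\<Sum>i<n. y i * r_fun m \<xi> i) = (\<Sum>i<n. x i * r_fun m \<xi> i)"
      by (rule sum.cong) (auto simp: y_def)
    then show ?thesis by (simp add: phi_num_def y_def)
  qed
  have evv: "evalE v (Suc n) = gpow (E 0) (- (?a * ?r)) @ gpow (E n) ?a"
  proof -
    have "evalE v n = gpow (E 0) (v 0) @ evalE (v(0 := 0)) n" using n by (rule evalE_split0)
    moreover have "evalE (v(0 := 0)) n = []" by (rule evalE_zero) (simp add: v_def)
    ultimately show ?thesis using n0 by (simp add: evalE_Suc v_def)
  qed
  have "x = (\<lambda>i. y i + v i)" by (rule ext) (simp add: y_def v_def n0)
  then have "evalE x (Suc n) = evalE (\<lambda>i. y i + v i) (Suc n)" by simp
  also have "word_eq ?R \<dots> (evalE y (Suc n) @ evalE v (Suc n))" by (rule evalE_add)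
  also have "evalE y (Suc n) = evalE y n" using evalE_ext[OF suppy, of "Suc n"] by simp
  also have "word_eq ?R (evalE y n @ evalE v (Suc n)) (evalE y n @ (gpow (E n) ?a @ gpow (E 0) (- (?a * ?r))))"
    unfolding evv by (rule we_app[OF we_refl Eword_comm]) simp_all
  finally show "word_eq ?R (evalE x (Suc n)) (evalE y n @ (gpow (E n) ?a @ gpow (E 0) (- (?a * ?r))))" .
qed

text \<open>Conjugation by \<open>a\<close> realises \<open>\<phi>\<close> on \<open>E\<^sub>m\<^sub>,\<^sub>\<xi>\<close>: \<open>a x a\<^sup>-\<^sup>1 = \<phi>(x)\<close> in \<open>BStilde\<close>.\<close>
lemma conj_a_evalE:
  assumes m: "m \<noteq> 0"
  shows "1 \<le> n \<Longrightarrow> supp x n \<Longrightarrow> m dvd phi_num m \<xi> n x \<Longrightarrow>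
    word_eq (BStilde_rels m \<xi>) (conj_a (evalE x n)) (evalE (phi_coords m \<xi> n x) (Suc n))"
proof (induction n arbitrary: x rule: dec_induct)
  case base
  obtain d where d: "x 0 = m * d" using base(2) by (auto simp: phi_num_def elim: dvdE)
  have "evalE x 1 = gpow (E 0) (m * d)" using d by (simp add: evalE_Suc)
  moreover have "evalE (phi_coords m \<xi> 1 x) (Suc 1) = gpow (E 1) d"
    using d m by (simp add: evalE_Suc phi_coords_def phi_num_def)
  ultimately show ?case using conj_a_E0_block[of m \<xi> d] by simp
next
  case (step n)
  let ?R = "BStilde_rels m \<xi>" and ?a = "x n"
  define y where "y = (x(n := 0))(0 := x 0 + ?a * r_fun m \<xi> n)"
  note peel = evalE_peel[OF step(1) step(4), where m=m and \<xi>=\<xi>, folded y_def]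
  have IH: "word_eq ?R (conj_a (evalE y n)) (evalE (phi_coords m \<xi> n y) (Suc n))"
    using step.IH peel(1,2) step(5) by simp
  have "word_eq ?R (conj_a (evalE x (Suc n)))
     (conj_a (evalE y n) @ conj_a (gpow (E n) ?a @ gpow (E 0) (- (?a * r_fun m \<xi> n))))"
    using conj_a_cong[OF peel(3)] conj_a_app by (blast intro: we_trans)
  also have "word_eq ?R \<dots> (evalE (phi_coords m \<xi> n y) (Suc n) @ gpow (E (Suc n)) ?a)"
    using IH conj_a_Ei_block[OF step(1)] by (intro we_app) simp_all
  also have "\<dots> = evalE (phi_coords m \<xi> (Suc n) x) (Suc (Suc n))"
  proof -
    have "evalE (phi_coords m \<xi> (Suc n) x) (Suc n) = evalE (phi_coords m \<xi> n y) (Suc n)"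
      using peel(2) by (intro evalE_cong) (auto simp: phi_coords_def y_def)
    moreover have "phi_coords m \<xi> (Suc n) x (Suc n) = ?a" using step(1) by (simp add: phi_coords_def)
    ultimately show ?thesis by (simp add: evalE_Suc)
  qed
  finally show ?case .
qed

section \<open>Normal forms in \<open>BStilde\<close>\<close>

text \<open>A state \<open>(L, z, n)\<close> stands for \<open>e\<^sub>0^c\<^sub>1 a^\<epsilon>\<^sub>1 \<cdots> e\<^sub>0^c\<^sub>k a^\<epsilon>\<^sub>k x\<close> with \<open>x = \<Sum>\<^sub>i\<^sub><\<^sub>n z\<^sub>i e\<^sub>i \<in> E\<close>
  (value \<open>evalT\<close>), the \<open>c\<^sub>i\<close> being the normal-form digits of the HNN extension.  Reading a letter
  of \<open>a\<^sup>\<plusminus>\<^sup>1, e\<^sub>0\<^sup>\<plusminus>\<^sup>1\<close> updates the state so that its value is multiplied by that letter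
  (\<open>eval_act\<close>); the other letters are never read.\<close>

text \<open>Coordinates of \<open>\<phi>\<^sup>-\<^sup>1(x - x\<^sub>0 e\<^sub>0)\<close> for \<open>x = \<Sum>\<^sub>i\<^sub><\<^sub>n z\<^sub>i e\<^sub>i\<close>.\<close>
definition phi_inv_coords :: "int \<Rightarrow> (nat \<Rightarrow> int) \<Rightarrow> nat \<Rightarrow> (nat \<Rightarrow> int) \<Rightarrow> (nat \<Rightarrow> int)" where
  "phi_inv_coords m \<xi> n z = (\<lambda>i. if i = 0 then m * z 1 - (\<Sum>k<n. z (Suc k) * r_fun m \<xi> k) else z (Suc i))"

fun stepT :: "int \<Rightarrow> (nat \<Rightarrow> int) \<Rightarrow> tgen \<times> bool \<Rightarrow> (int \<times> bool) list \<times> (nat \<Rightarrow> int) \<times> nat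
   \<Rightarrow> (int \<times> bool) list \<times> (nat \<Rightarrow> int) \<times> nat" where
  "stepT m \<xi> (TA, True) (L, z, n) = (let x = phi_inv_coords m \<xi> n z in
     if z 0 = 0 \<and> L \<noteq> [] \<and> \<not> snd (last L) then (butlast L, x(0 := x 0 + fst (last L)), n)
     else (L @ [(z 0, True)], x, n))"
| "stepT m \<xi> (TA, False) (L, z, n) = (let c = phi_num m \<xi> n z mod \<bar>m\<bar>; y = phi_coords m \<xi> n (z(0 := z 0 - c)) in
     if c = 0 \<and> L \<noteq> [] \<and> snd (last L) then (butlast L, y(0 := fst (last L)), Suc n)
     else (L @ [(c, False)], y, Suc n))"
| "stepT m \<xi> (E i, e) (L, z, n) = (if i = 0 then (L, z(0 := z 0 + (if e then 1 else -1)), n) else (L, z, n))"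

definition actT :: "int \<Rightarrow> (nat \<Rightarrow> int) \<Rightarrow> tgen word \<Rightarrow> (int \<times> bool) list \<times> (nat \<Rightarrow> int) \<times> nat
   \<Rightarrow> (int \<times> bool) list \<times> (nat \<Rightarrow> int) \<times> nat" where
  "actT m \<xi> w s = fold (stepT m \<xi>) w s"

lemma actT_simps[simp]: "actT m \<xi> [] s = s" "actT m \<xi> (x # w) s = actT m \<xi> w (stepT m \<xi> x s)"
  "actT m \<xi> (u @ v) s = actT m \<xi> v (actT m \<xi> u s)"
  by (simp_all add: actT_def)

definition evalL :: "(int \<times> bool) list \<Rightarrow> tgen word" where
  "evalL L = concat (map (\<lambda>p. gpow (E 0) (fst p) @ [(TA, snd p)]) L)"

lemma evalL_simps[simp]: "evalL [] = []" "evalL (L @ [p]) = evalL L @ gpow (E 0) (fst p) @ [(TA, snd p)]"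
  by (simp_all add: evalL_def)

definition evalT :: "(int \<times> bool) list \<times> (nat \<Rightarrow> int) \<times> nat \<Rightarrow> tgen word" where
  "evalT s = evalL (fst s) @ evalE (fst (snd s)) (snd (snd s))"

definition invT :: "(int \<times> bool) list \<times> (nat \<Rightarrow> int) \<times> nat \<Rightarrow> bool" where
  "invT s = (supp (fst (snd s)) (snd (snd s)) \<and> 1 \<le> snd (snd s))"

lemma phi_num_upd0: "phi_num m \<xi> n (z(0 := v)) = phi_num m \<xi> n z - z 0 + v"
proof -
  have "(\<Sum>i<n. (z(0 := v)) i * r_fun m \<xi> i) = (\<Sum>i<n. z i * r_fun m \<xi> i)"
    by (rule sum.cong) auto
  then show ?thesis by (simp add: phi_num_def)
qed

lemma phi_num_phi_inv_coords: "phi_num m \<xi> n (phi_inv_coords m \<xi> n z) = m * z 1"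
proof -
  have "(\<Sum>i<n. phi_inv_coords m \<xi> n z i * r_fun m \<xi> i) = (\<Sum>k<n. z (Suc k) * r_fun m \<xi> k)"
    by (rule sum.cong) (auto simp: phi_inv_coords_def)
  then show ?thesis by (simp add: phi_num_def phi_inv_coords_def)
qed

lemma phi_coords_phi_inv_coords: "m \<noteq> 0 \<Longrightarrow> phi_coords m \<xi> n (phi_inv_coords m \<xi> n z) = z(0 := 0)"
  unfolding phi_coords_def phi_num_phi_inv_coords by (rule ext) (auto simp: phi_inv_coords_def)

lemma supp_phi_inv_coords: "supp z n \<Longrightarrow> 1 \<le> n \<Longrightarrow> supp (phi_inv_coords m \<xi> n z) n"
  by (auto simp: supp_def phi_inv_coords_def)

lemma supp_phi_coords: "supp z n \<Longrightarrow> 1 \<le> n \<Longrightarrow> supp (phi_coords m \<xi> n z) (Suc n)"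
  by (auto simp: supp_def phi_coords_def)

lemma supp_upd0[simp]: "1 \<le> n \<Longrightarrow> supp (z(0 := v)) n \<longleftrightarrow> supp z n"
  by (auto simp: supp_def)

context
  fixes m :: int and \<xi> :: "nat \<Rightarrow> int"
  assumes m: "m \<noteq> 0"
begin

abbreviation "RT \<equiv> BStilde_rels m \<xi>"

lemma conj_a_move1: "word_eq RT (conj_a X) Y \<Longrightarrow> word_eq RT (X @ [(TA, False)]) ([(TA, False)] @ Y)"
  unfolding conj_a_def using we_move_l[of RT "[(TA, True)]" "X @ [(TA, False)]" Y] by (simp add: winv_def)

lemma conj_a_move2: "word_eq RT (conj_a X) Y \<Longrightarrow> word_eq RT ([(TA, True)] @ X) (Y @ [(TA, True)])"
  unfolding conj_a_def using we_move_r[of RT "[(TA, True)] @ X" "[(TA, False)]" Y] by (simp add: winv_def)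

lemma stepT_inv: "invT s \<Longrightarrow> invT (stepT m \<xi> x s)"
proof -
  assume a: "invT s"
  obtain L z n where s: "s = (L, z, n)" by (cases s)
  obtain g e where x: "x = (g, e)" by (cases x)
  have sz: "supp z n" "1 \<le> n" using a s by (auto simp: invT_def)
  then show ?thesis using s x
    by (cases g; cases e) (auto simp: invT_def Let_def supp_phi_inv_coords supp_phi_coords)
qed

lemma evalE_times_a:
  assumes sz: "supp z n" and n1: "1 \<le> n"
  shows "word_eq RT (evalE z n @ [(TA, True)])
    (gpow (E 0) (z 0) @ [(TA, True)] @ evalE (phi_inv_coords m \<xi> n z) n)"
proof -
  let ?x = "phi_inv_coords m \<xi> n z" and ?Z = "evalE (z(0 := 0)) n"
  have c1: "word_eq RT (conj_a (evalE ?x n)) (evalE (phi_coords m \<xi> n ?x) (Suc n))"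
    by (rule conj_a_evalE[OF m n1 supp_phi_inv_coords[OF sz n1]]) (simp add: phi_num_phi_inv_coords)
  have "evalE (phi_coords m \<xi> n ?x) (Suc n) = ?Z"
    using phi_coords_phi_inv_coords[OF m] evalE_ext[of "z(0 := 0)" n "Suc n"] sz by (simp add: supp_def)
  then have "word_eq RT ([(TA, True)] @ evalE ?x n) (?Z @ [(TA, True)])"
    using conj_a_move2[OF c1] by simp
  then show ?thesis
    unfolding evalE_split0[OF n1, of z] using we_app[OF we_refl[of RT "gpow (E 0) (z 0)"] we_sym] by simp
qed

text \<open>\<open>x a\<^sup>-\<^sup>1 = e\<^sub>0^c a\<^sup>-\<^sup>1 \<phi>(x - c e\<^sub>0)\<close> for \<open>x \<in> E\<close>, where \<open>c\<close> is the digit making \<open>x - c e\<^sub>0 \<in> E\<^sub>m\<^sub>,\<^sub>\<xi>\<close>.\<close>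
lemma evalE_times_ainv:
  assumes sz: "supp z n" and n1: "1 \<le> n"
  defines "c \<equiv> phi_num m \<xi> n z mod \<bar>m\<bar>"
  shows "word_eq RT (evalE z n @ [(TA, False)])
    (gpow (E 0) c @ [(TA, False)] @ evalE (phi_coords m \<xi> n (z(0 := z 0 - c))) (Suc n))"
proof -
  define x' where "x' = z(0 := z 0 - c)"
  have sx: "supp x' n" using sz n1 by (auto simp: supp_def x'_def)
  have "phi_num m \<xi> n x' = \<bar>m\<bar> * (phi_num m \<xi> n z div \<bar>m\<bar>)"
    unfolding x'_def phi_num_upd0 c_def by (simp add: minus_mod_eq_mult_div)
  then have dx: "m dvd phi_num m \<xi> n x'" by simp
  have c2: "word_eq RT (evalE x' n @ [(TA, False)]) ([(TA, False)] @ evalE (phi_coords m \<xi> n x') (Suc n))"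
    by (rule conj_a_move1[OF conj_a_evalE[OF m n1 sx dx]])
  have "evalE x' n = gpow (E 0) (z 0 - c) @ evalE (z(0 := 0)) n"
    using evalE_split0[OF n1, of x'] by (simp add: x'_def)
  then have "word_eq RT (gpow (E 0) c @ evalE x' n) (gpow (E 0) (c + (z 0 - c)) @ evalE (z(0 := 0)) n)"
    using gpow_add'[of RT "E 0" c "z 0 - c"] by simp
  then have ezx: "word_eq RT (evalE z n) (gpow (E 0) c @ evalE x' n)"
    using evalE_split0[OF n1, of z] by (simp add: we_sym)
  have "word_eq RT (evalE z n @ [(TA, False)]) ((gpow (E 0) c @ evalE x' n) @ [(TA, False)])"
    by (intro we_app ezx we_refl)
  also have "word_eq RT \<dots> (gpow (E 0) c @ ([(TA, False)] @ evalE (phi_coords m \<xi> n x') (Suc n)))"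
    using we_app[OF we_refl[of RT "gpow (E 0) c"] c2] by simp
  finally show ?thesis by (simp add: x'_def)
qed

lemma eval_step_E0:
  assumes n1: "1 \<le> n"
  shows "word_eq RT (evalT (stepT m \<xi> (E 0, e) (L, z, n))) (evalT (L, z, n) @ [(E 0, e)])"
proof -
  define d where "d = (if e then 1 else -1 :: int)"
  let ?Z = "evalE (z(0 := 0)) n"
  have gd: "[(E 0, e)] = gpow (E 0) d" by (simp add: d_def)
  have "evalE (z(0 := z 0 + d)) n = gpow (E 0) (z 0 + d) @ ?Z"
    using evalE_split0[OF n1, of "z(0 := z 0 + d)"] by simp
  also have "word_eq RT \<dots> ((gpow (E 0) (z 0) @ gpow (E 0) d) @ ?Z)"
    by (rule we_app[OF we_sym[OF gpow_add] we_refl])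
  also have "word_eq RT ((gpow (E 0) (z 0) @ gpow (E 0) d) @ ?Z) (gpow (E 0) (z 0) @ (?Z @ gpow (E 0) d))"
    using we_app[OF we_refl[of RT "gpow (E 0) (z 0)"] Eword_comm[of "gpow (E 0) d" ?Z m \<xi>]] by simp
  finally have "word_eq RT (evalE (z(0 := z 0 + d)) n) (evalE z n @ [(E 0, e)])"
    using evalE_split0[OF n1, of z] gd by simp
  then show ?thesis by (simp add: d_def evalT_def we_app[OF we_refl])
qed

lemma eval_step_a:
  assumes sz: "supp z n" and n1: "1 \<le> n"
  shows "word_eq RT (evalT (stepT m \<xi> (TA, True) (L, z, n))) (evalT (L, z, n) @ [(TA, True)])"
proof -
  let ?x = "phi_inv_coords m \<xi> n z"
  have key: "word_eq RT (evalE z n @ [(TA, True)]) (gpow (E 0) (z 0) @ [(TA, True)] @ evalE ?x n)"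
    by (rule evalE_times_a[OF sz n1])
  show ?thesis
  proof (cases "z 0 = 0 \<and> L \<noteq> [] \<and> \<not> snd (last L)")
    case True
    then obtain L' c' where L: "L = L' @ [(c', False)]"
      by (metis append_butlast_last_id prod.collapse)
    have "evalT (L, z, n) @ [(TA, True)] = evalL L' @ gpow (E 0) c' @ [(TA, False)] @ (evalE z n @ [(TA, True)])"
      using L by (simp add: evalT_def)
    also have "word_eq RT \<dots> (evalL L' @ gpow (E 0) c' @ [(TA, False)] @ (gpow (E 0) (z 0) @ [(TA, True)] @ evalE ?x n))"
      by (intro we_app we_refl key)
    also have "\<dots> = (evalL L' @ gpow (E 0) c') @ (TA, False) # (TA, \<not> False) # evalE ?x n"
      using True by simp
    also have "word_eq RT \<dots> ((evalL L' @ gpow (E 0) c') @ evalE ?x n)" by (rule we_cancel')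
    also have "evalE ?x n = gpow (E 0) (?x 0) @ evalE (?x(0 := 0)) n" by (rule evalE_split0[OF n1])
    also have "word_eq RT ((evalL L' @ gpow (E 0) c') @ gpow (E 0) (?x 0) @ evalE (?x(0 := 0)) n)
         (evalL L' @ gpow (E 0) (?x 0 + c') @ evalE (?x(0 := 0)) n)"
      using we_app[OF we_refl[of RT "evalL L'"] gpow_add'[of RT "E 0" c' "?x 0" "evalE (?x(0 := 0)) n"]]
      by (simp add: add.commute)
    also have "\<dots> = evalT (stepT m \<xi> (TA, True) (L, z, n))"
      using True L evalE_split0[OF n1, of "?x(0 := ?x 0 + c')"] by (simp add: evalT_def Let_def)
    finally show ?thesis by (rule we_sym)
  next
    case False
    then show ?thesis using we_app[OF we_refl[of RT "evalL L"] key]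
      by (auto simp: evalT_def Let_def we_sym)
  qed
qed

lemma eval_step_ainv:
  assumes sz: "supp z n" and n1: "1 \<le> n"
  shows "word_eq RT (evalT (stepT m \<xi> (TA, False) (L, z, n))) (evalT (L, z, n) @ [(TA, False)])"
proof -
  define c where "c = phi_num m \<xi> n z mod \<bar>m\<bar>"
  define y where "y = phi_coords m \<xi> n (z(0 := z 0 - c))"
  have key: "word_eq RT (evalE z n @ [(TA, False)]) (gpow (E 0) c @ [(TA, False)] @ evalE y (Suc n))"
    unfolding c_def y_def by (rule evalE_times_ainv[OF sz n1])
  show ?thesis
  proof (cases "c = 0 \<and> L \<noteq> [] \<and> snd (last L)")
    case True
    then obtain L' c' where L: "L = L' @ [(c', True)]"
      by (metis append_butlast_last_id prod.collapse)
    have "evalT (L, z, n) @ [(TA, False)] = (evalL L' @ gpow (E 0) c') @ [(TA, True)] @ (evalE z n @ [(TA, False)])"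
      using L by (simp add: evalT_def)
    also have "word_eq RT \<dots> ((evalL L' @ gpow (E 0) c') @ [(TA, True)] @ ([(TA, False)] @ evalE y (Suc n)))"
      using we_app[OF we_refl[of RT "(evalL L' @ gpow (E 0) c') @ [(TA, True)]"] key] True by simp
    also have "word_eq RT \<dots> ((evalL L' @ gpow (E 0) c') @ evalE y (Suc n))"
      using we_cancel'[of RT "evalL L' @ gpow (E 0) c'" TA True "evalE y (Suc n)"] by simp
    also have "\<dots> = evalT (stepT m \<xi> (TA, False) (L, z, n))"
    proof -
      have "y(0 := 0) = y" by (simp add: y_def fun_upd_idem)
      then show ?thesis
        using True L evalE_split0[of "Suc n" "y(0 := c')"] by (simp add: evalT_def Let_def c_def y_def)
    qed
    finally show ?thesis by (rule we_sym)
  next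
    case False
    then show ?thesis using we_app[OF we_refl[of RT "evalL L"] key]
      by (auto simp: evalT_def Let_def we_sym c_def y_def)
  qed
qed

lemma eval_step:
  assumes inv: "invT s" and x: "fst x = TA \<or> fst x = E 0"
  shows "word_eq RT (evalT (stepT m \<xi> x s)) (evalT s @ [x])"
proof -
  obtain L z n where s: "s = (L, z, n)" by (cases s)
  obtain g e where xe: "x = (g, e)" by (cases x)
  have sz: "supp z n" and n1: "1 \<le> n" using inv s by (auto simp: invT_def)
  consider "g = E 0" | "g = TA" "e" | "g = TA" "\<not> e" using x xe by (cases g) auto
  then show ?thesis
    using eval_step_E0[OF n1] eval_step_a[OF sz n1] eval_step_ainv[OF sz n1] s xe by cases auto
qed

lemma eval_act:
  assumes "invT s" "\<forall>p \<in> set w. fst p = TA \<or> fst p = E 0"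
  shows "word_eq RT (evalT (actT m \<xi> w s)) (evalT s @ w)"
  using assms
proof (induction w arbitrary: s)
  case Nil then show ?case by simp
next
  case (Cons x w)
  have i: "invT (stepT m \<xi> x s)" by (rule stepT_inv[OF Cons.prems(1)])
  have "word_eq RT (evalT (actT m \<xi> w (stepT m \<xi> x s))) (evalT (stepT m \<xi> x s) @ w)"
    using Cons.IH[OF i] Cons.prems(2) by simp
  also have "word_eq RT \<dots> ((evalT s @ [x]) @ w)"
    using Cons.prems by (intro we_app we_refl eval_step) auto
  finally show ?case by simp
qed

lemma act_inv: "invT s \<Longrightarrow> invT (actT m \<xi> w s)"
proof (induction w arbitrary: s)
  case Nil then show ?case by simp
next
  case (Cons x w) then show ?case using stepT_inv by simp
qed

end

section \<open>Comparing the normal forms of \<open>BStilde\<close> and \<open>BS(m,q)\<close>\<close>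

text \<open>\<open>theta\<close> evaluates \<open>\<Sum> z\<^sub>i e\<^sub>i\<close> in \<open>BS(m,q)\<close> as \<open>b^(\<Sum> z\<^sub>i bexp\<^sub>i)\<close>, i.e.\ it reads \<open>e\<^sub>i\<close> as the
  image of \<open>b\<^sub>i\<close>; on states it keeps the list of digits.\<close>

definition theta :: "int \<Rightarrow> int \<Rightarrow> (nat \<Rightarrow> int) \<Rightarrow> nat \<Rightarrow> int" where
  "theta m q z n = (\<Sum>i<n. z i * bexp m q i)"

definition theta_state :: "int \<Rightarrow> int \<Rightarrow> (int \<times> bool) list \<times> (nat \<Rightarrow> int) \<times> nat \<Rightarrow> (int \<times> bool) list \<times> int" where
  "theta_state m q s = (fst s, theta m q (fst (snd s)) (snd (snd s)))"

definition theta_tail :: "int \<Rightarrow> int \<Rightarrow> (nat \<Rightarrow> int) \<Rightarrow> nat \<Rightarrow> int" where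
  "theta_tail m q z n = (\<Sum>k<n. z (Suc k) * sq m q k)"

lemma theta_split:
  assumes "supp z n" "1 \<le> n"
  shows "theta m q z n = z 0 + q * theta_tail m q z n"
proof -
  obtain N where n: "n = Suc N" using assms(2) by (cases n) auto
  have zn: "z (Suc N) = 0" using assms(1) n by (simp add: supp_def)
  have "theta m q z n = z 0 * bexp m q 0 + (\<Sum>k<N. z (Suc k) * bexp m q (Suc k))"
    unfolding theta_def n by (rule sum.lessThan_Suc_shift)
  also have "\<dots> = z 0 + q * (\<Sum>k<N. z (Suc k) * sq m q k)"
    by (simp add: sum_distrib_left algebra_simps)
  also have "(\<Sum>k<N. z (Suc k) * sq m q k) = theta_tail m q z n"
    using zn by (simp add: theta_tail_def n)
  finally show ?thesis .
qed

lemma theta_upd0: "1 \<le> n \<Longrightarrow> theta m q (z(0 := v)) n = theta m q z n - z 0 + v"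
proof -
  assume "1 \<le> n"
  then obtain N where n: "n = Suc N" by (cases n) auto
  have "theta m q (z(0 := v)) n = v * bexp m q 0 + (\<Sum>k<N. z (Suc k) * bexp m q (Suc k))"
    unfolding theta_def n by (subst sum.lessThan_Suc_shift) simp
  moreover have "theta m q z n = z 0 * bexp m q 0 + (\<Sum>k<N. z (Suc k) * bexp m q (Suc k))"
    unfolding theta_def n by (rule sum.lessThan_Suc_shift)
  ultimately show ?thesis by simp
qed

text \<open>\<open>theta\<close> intertwines \<open>\<phi>\<^sup>-\<^sup>1\<close> with \<open>b^(q k) \<mapsto> b^(m k)\<close>, as long as the digits used agree.\<close>
lemma theta_phi_inv_coords:
  assumes m: "m \<noteq> 0" and sz: "supp z n" and n1: "1 \<le> n"
    and rl: "\<And>j. 1 \<le> j \<Longrightarrow> j < n \<Longrightarrow> r_fun m \<xi> j = rq m q j"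
  shows "theta m q (phi_inv_coords m \<xi> n z) n = m * theta_tail m q z n"
proof -
  obtain N where n: "n = Suc N" using n1 by (cases n) auto
  let ?x = "phi_inv_coords m \<xi> n z"
  have sx: "supp ?x n" by (rule supp_phi_inv_coords[OF sz n1])
  have zn: "z (Suc N) = 0" "z (Suc (Suc N)) = 0" using sz n by (auto simp: supp_def)
  have t1: "theta m q ?x n = ?x 0 + q * theta_tail m q ?x n" by (rule theta_split[OF sx n1])
  have x0: "?x 0 = m * z 1 - (\<Sum>k<N. z (Suc (Suc k)) * rq m q (Suc k))"
  proof -
    have "(\<Sum>k<n. z (Suc k) * r_fun m \<xi> k) = z 1 * r_fun m \<xi> 0 + (\<Sum>k<N. z (Suc (Suc k)) * r_fun m \<xi> (Suc k))"
      unfolding n by (subst sum.lessThan_Suc_shift) simp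
    also have "(\<Sum>k<N. z (Suc (Suc k)) * r_fun m \<xi> (Suc k)) = (\<Sum>k<N. z (Suc (Suc k)) * rq m q (Suc k))"
      by (rule sum.cong) (auto simp: rl n)
    finally show ?thesis by (simp add: phi_inv_coords_def)
  qed
  have sx1: "theta_tail m q ?x n = (\<Sum>k<N. z (Suc (Suc k)) * sq m q k)"
  proof -
    have "theta_tail m q ?x n = (\<Sum>k<N. z (Suc (Suc k)) * sq m q k) + z (Suc (Suc N)) * sq m q N"
      by (simp add: theta_tail_def n phi_inv_coords_def)
    then show ?thesis using zn by simp
  qed
  have "m * theta_tail m q z n = m * (z 1 * sq m q 0 + (\<Sum>k<N. z (Suc (Suc k)) * sq m q (Suc k)))"
    unfolding theta_tail_def n by (subst sum.lessThan_Suc_shift) simp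
  also have "\<dots> = m * z 1 + (\<Sum>k<N. z (Suc (Suc k)) * (m * sq m q (Suc k)))"
    by (simp add: sum_distrib_left algebra_simps)
  also have "(\<Sum>k<N. z (Suc (Suc k)) * (m * sq m q (Suc k))) = (\<Sum>k<N. z (Suc (Suc k)) * (q * sq m q k - rq m q (Suc k)))"
    by (rule sum.cong) (auto simp: sq_Suc[OF m, symmetric])
  also have "\<dots> = q * (\<Sum>k<N. z (Suc (Suc k)) * sq m q k) - (\<Sum>k<N. z (Suc (Suc k)) * rq m q (Suc k))"
    by (simp add: sum_distrib_left sum_subtractf algebra_simps)
  finally show ?thesis using t1 x0 sx1 by simp
qed

lemma theta_phi_num:
  assumes m: "m \<noteq> 0" and n1: "1 \<le> n"
    and rl: "\<And>j. 1 \<le> j \<Longrightarrow> j < n \<Longrightarrow> r_fun m \<xi> j = rq m q j"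
  shows "theta m q z n = phi_num m \<xi> n z + m * ((\<Sum>i<n. z i * sq m q i) - z 0)"
proof -
  have eq: "z i * bexp m q i = z i * r_fun m \<xi> i + m * (z i * sq m q i) + (if i = 0 then z 0 * (1 - m) else 0)"
    if "i < n" for i
  proof (cases i)
    case 0 then show ?thesis by (simp add: sq_def algebra_simps)
  next
    case (Suc k)
    have r: "r_fun m \<xi> i = rq m q i" using rl[of i] that Suc by simp
    have e: "q * sq m q k = rq m q (Suc k) + m * sq m q (Suc k)" using sq_Suc[OF m, of q k] by simp
    have "z i * bexp m q i = z i * (q * sq m q k)" using Suc by simp
    also have "\<dots> = z i * (rq m q (Suc k) + m * sq m q (Suc k))" using e by simp
    finally show ?thesis using Suc r by (simp add: algebra_simps)
  qed
  have "theta m q z n = (\<Sum>i<n. z i * r_fun m \<xi> i + m * (z i * sq m q i) + (if i = 0 then z 0 * (1 - m) else 0))"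
    unfolding theta_def by (rule sum.cong) (auto simp: eq)
  also have "\<dots> = (\<Sum>i<n. z i * r_fun m \<xi> i) + m * (\<Sum>i<n. z i * sq m q i) + z 0 * (1 - m)"
    using n1 by (simp add: sum.distrib sum_distrib_left)
  finally show ?thesis by (simp add: phi_num_def algebra_simps)
qed

text \<open>\<open>theta\<close> intertwines \<open>\<phi>\<close> with \<open>b^(m k) \<mapsto> b^(q k)\<close>.\<close>
lemma theta_phi_coords:
  assumes m: "m \<noteq> 0" and sx: "supp x n" and n1: "1 \<le> n"
  shows "theta m q (phi_coords m \<xi> n x) (Suc n) = q * (phi_num m \<xi> n x div m + (\<Sum>i<n. x i * sq m q i) - x 0)"
proof -
  have sy: "supp (phi_coords m \<xi> n x) (Suc n)" by (rule supp_phi_coords[OF sx n1])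
  have "theta m q (phi_coords m \<xi> n x) (Suc n) = q * theta_tail m q (phi_coords m \<xi> n x) (Suc n)"
    using theta_split[OF sy] by simp
  also have "theta_tail m q (phi_coords m \<xi> n x) (Suc n) = phi_num m \<xi> n x div m * sq m q 0 + (\<Sum>k<n. x (Suc k) * sq m q (Suc k))"
    unfolding theta_tail_def by (subst sum.lessThan_Suc_shift) (simp add: phi_coords_def)
  also have "(\<Sum>k<n. x (Suc k) * sq m q (Suc k)) = (\<Sum>i<n. x i * sq m q i) - x 0"
  proof -
    have "(\<Sum>i<Suc n. x i * sq m q i) = x 0 * sq m q 0 + (\<Sum>k<n. x (Suc k) * sq m q (Suc k))"
      by (rule sum.lessThan_Suc_shift)
    moreover have "(\<Sum>i<Suc n. x i * sq m q i) = (\<Sum>i<n. x i * sq m q i)" using sx by (simp add: supp_def)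
    ultimately show ?thesis by simp
  qed
  finally show ?thesis by (simp add: algebra_simps)
qed

text \<open>Reading \<open>a\<close>: the digit \<open>z\<^sub>0\<close> is the symmetric residue of \<open>theta\<close> when \<open>z\<^sub>0\<close> is small.\<close>
lemma theta_step_a:
  assumes m: "m \<noteq> 0" and q: "q \<noteq> 0" and sz: "supp z n" and n1: "1 \<le> n"
    and rl: "\<And>j. 1 \<le> j \<Longrightarrow> j < n \<Longrightarrow> r_fun m \<xi> j = rq m q j"
    and small: "2 * \<bar>z 0\<bar> < \<bar>q\<bar>"
  shows "theta_state m q (stepT m \<xi> (TA, True) (L, z, n)) = stepB m q (A, True) (L, theta m q z n)"
proof -
  have "stepB m q (A, True) (L, z 0 + q * theta_tail m q z n) =
    (if z 0 = 0 \<and> L \<noteq> [] \<and> \<not> snd (last L) then (butlast L, fst (last L) + m * theta_tail m q z n)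
     else (L @ [(z 0, True)], m * theta_tail m q z n))"
    by (rule stepA_qj[OF m q symres_small[OF small]])
  moreover have "theta m q (phi_inv_coords m \<xi> n z) n = m * theta_tail m q z n"
    by (rule theta_phi_inv_coords[OF m sz n1 rl])
  ultimately show ?thesis
    using n1 by (auto simp: theta_state_def Let_def theta_upd0 theta_split[OF sz n1])
qed

text \<open>Reading \<open>a\<^sup>-\<^sup>1\<close>: both sides split off the same digit modulo \<open>m\<close>.\<close>
lemma theta_step_ainv:
  assumes m: "m \<noteq> 0" and q: "q \<noteq> 0" and sz: "supp z n" and n1: "1 \<le> n"
    and rl: "\<And>j. 1 \<le> j \<Longrightarrow> j < n \<Longrightarrow> r_fun m \<xi> j = rq m q j"
  shows "theta_state m q (stepT m \<xi> (TA, False) (L, z, n)) = stepB m q (A, False) (L, theta m q z n)"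
proof -
  define c where "c = phi_num m \<xi> n z mod \<bar>m\<bar>"
  define M where "M = (\<Sum>i<n. z i * sq m q i) - z 0"
  define x' where "x' = z(0 := z 0 - c)"
  have Z: "theta m q z n = phi_num m \<xi> n z + m * M" unfolding M_def by (rule theta_phi_num[OF m n1 rl])
  obtain k where k: "phi_num m \<xi> n z - c = m * k"
    unfolding c_def using minus_mod_eq_mult_div[of "phi_num m \<xi> n z" "\<bar>m\<bar>"]
    by (metis abs_dvd_iff dvd_def dvd_mult2 dvd_refl)
  have jj: "(phi_num m \<xi> n z + m * M - c) div m = (phi_num m \<xi> n z - c) div m + M"
  proof -
    have "phi_num m \<xi> n z + m * M - c = m * (k + M)" using k by (simp add: algebra_simps)
    then show ?thesis using k m by simp
  qed
  have "(\<Sum>i<n. x' i * sq m q i) - x' 0 = M"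
  proof -
    obtain N where n: "n = Suc N" using n1 by (cases n) auto
    show ?thesis unfolding n M_def x'_def by (subst (1 2) sum.lessThan_Suc_shift) simp
  qed
  moreover have "supp x' n" using sz n1 by (simp add: x'_def)
  ultimately have tE: "theta m q (phi_coords m \<xi> n x') (Suc n) = q * ((phi_num m \<xi> n z - c) div m + M)"
    using theta_phi_coords[OF m _ n1, where q=q and \<xi>=\<xi>] by (simp add: x'_def phi_num_upd0)
  have "stepB m q (A, False) (L, phi_num m \<xi> n z + m * M) =
    (if c = 0 \<and> L \<noteq> [] \<and> snd (last L) then (butlast L, fst (last L) + q * ((phi_num m \<xi> n z + m * M - c) div m))
     else (L @ [(c, False)], q * ((phi_num m \<xi> n z + m * M - c) div m)))"
    unfolding c_def by (rule stepAi_mj[OF m q])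
  then show ?thesis
    using tE n1 Z jj by (auto simp: theta_state_def Let_def theta_upd0 c_def x'_def)
qed

lemma theta_step:
  assumes m: "m \<noteq> 0" and q: "q \<noteq> 0" and inv: "invT s"
    and rl: "\<And>j. 1 \<le> j \<Longrightarrow> j \<le> snd (snd s) \<Longrightarrow> r_fun m \<xi> j = rq m q j"
    and small: "2 * \<bar>fst (snd s) 0\<bar> < \<bar>q\<bar>"
  shows "theta_state m q (stepT m \<xi> (tilde_letter g, e) s) = stepB m q (g, e) (theta_state m q s)"
proof -
  obtain L z n where s: "s = (L, z, n)" by (cases s)
  have sz: "supp z n" and n1: "1 \<le> n" using inv s by (auto simp: invT_def)
  have rl': "\<And>j. 1 \<le> j \<Longrightarrow> j < n \<Longrightarrow> r_fun m \<xi> j = rq m q j" using rl s by simp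
  show ?thesis
  proof (cases g)
    case B
    then show ?thesis using s n1 by (cases e) (simp_all add: theta_state_def theta_upd0)
  next
    case A
    then show ?thesis
      using theta_step_a[OF m q sz n1 rl'] theta_step_ainv[OF m q sz n1 rl'] small s
      by (cases e) (simp_all add: theta_state_def)
  qed
qed

definition init_state :: "(int \<times> bool) list \<times> (nat \<Rightarrow> int) \<times> nat" where
  "init_state = ([], \<lambda>_. 0, 1)"

lemma invT_init_state: "invT init_state" by (simp add: invT_def init_state_def supp_def)

lemma theta_act:
  assumes m: "m \<noteq> 0" and xi: "\<xi> \<in> madic m"
  shows "\<exists>Q H. 0 \<le> Q \<and> (\<forall>q. \<bar>q\<bar> > Q \<and> q mod \<bar>m\<bar> ^ H = \<xi> H \<longrightarrow>
     theta_state m q (actT m \<xi> (to_tilde w) init_state) = actB m q w ([], 0))"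
proof (induction w rule: rev_induct)
  case Nil
  show ?case by (rule exI[of _ 0], rule exI[of _ 0]) (simp add: init_state_def theta_state_def theta_def)
next
  case (snoc x w)
  obtain Q H where QH: "0 \<le> Q" "\<And>q. \<bar>q\<bar> > Q \<Longrightarrow> q mod \<bar>m\<bar> ^ H = \<xi> H \<Longrightarrow>
     theta_state m q (actT m \<xi> (to_tilde w) init_state) = actB m q w ([], 0)" using snoc by blast
  obtain L z n where s: "actT m \<xi> (to_tilde w) init_state = (L, z, n)" by (metis prod.collapse)
  have inv: "invT (L, z, n)" using act_inv[OF m invT_init_state, of \<xi> "to_tilde w"] s by simp
  obtain g e where x: "x = (g, e)" by (cases x)
  show ?case
  proof (intro exI conjI allI impI)
    show "0 \<le> max Q (2 * \<bar>z 0\<bar>)" using QH(1) by simp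
    fix q assume a: "\<bar>q\<bar> > max Q (2 * \<bar>z 0\<bar>) \<and> q mod \<bar>m\<bar> ^ max H (Suc n) = \<xi> (max H (Suc n))"
    have q0: "q \<noteq> 0" using a QH(1) by auto
    have qH: "q mod \<bar>m\<bar> ^ H = \<xi> H" by (rule approx_mono[OF xi a[THEN conjunct2]]) simp
    have rl: "\<And>j. 1 \<le> j \<Longrightarrow> j \<le> snd (snd (L, z, n)) \<Longrightarrow> r_fun m \<xi> j = rq m q j"
      using r_fun_approx[OF m xi a[THEN conjunct2]] by simp
    have IH: "theta_state m q (L, z, n) = actB m q w ([], 0)" using QH(2)[of q] a qH s by simp
    have small: "2 * \<bar>fst (snd (L, z, n)) 0\<bar> < \<bar>q\<bar>" using a by simp
    have "theta_state m q (stepT m \<xi> (tilde_letter g, e) (L, z, n)) = stepB m q (g, e) (theta_state m q (L, z, n))"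
      by (rule theta_step[OF m q0 inv rl small])
    also have "\<dots> = actB m q (w @ [x]) ([], 0)" using IH x by simp
    finally have "theta_state m q (stepT m \<xi> (tilde_letter g, e) (L, z, n)) = actB m q (w @ [x]) ([], 0)" .
    then show "theta_state m q (actT m \<xi> (to_tilde (w @ [x])) init_state) = actB m q (w @ [x]) ([], 0)"
      using s x by simp
  qed
qed

section \<open>Growth of \<open>s\<^sub>i(q)\<close> for large \<open>|q|\<close>\<close>

lemma sq_step:
  assumes m: "m \<noteq> 0" and q: "\<bar>m\<bar> * K \<le> \<bar>q\<bar>" and s1: "1 \<le> \<bar>sq m q k\<bar>"
  shows "(K - 1) * \<bar>sq m q k\<bar> \<le> \<bar>sq m q (Suc k)\<bar>"
proof -
  let ?s = "sq m q k" and ?s' = "sq m q (Suc k)" and ?r = "rq m q (Suc k)"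
  have e: "m * ?s' = q * ?s - ?r" using sq_Suc[OF m, of q k] by simp
  have A: "\<bar>m\<bar> * \<bar>?s'\<bar> = \<bar>q * ?s - ?r\<bar>" using e by (simp add: abs_mult[symmetric])
  have B0: "\<bar>q * ?s\<bar> - \<bar>?r\<bar> \<le> \<bar>q * ?s - ?r\<bar>" by (rule abs_triangle_ineq2)
  have B: "\<bar>q\<bar> * \<bar>?s\<bar> - \<bar>?r\<bar> \<le> \<bar>q * ?s - ?r\<bar>" using B0 by (simp only: abs_mult)
  have C: "\<bar>?r\<bar> < \<bar>m\<bar>" using rq_range[OF m, of q k] by simp
  have D: "(\<bar>m\<bar> * K) * \<bar>?s\<bar> \<le> \<bar>q\<bar> * \<bar>?s\<bar>" using q by (rule mult_right_mono) simp
  have "\<bar>m\<bar> * (K * \<bar>?s\<bar> - 1) \<le> \<bar>m\<bar> * \<bar>?s'\<bar>"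
  proof -
    have "\<bar>m\<bar> * (K * \<bar>?s\<bar> - 1) = (\<bar>m\<bar> * K) * \<bar>?s\<bar> - \<bar>m\<bar>" by (simp add: algebra_simps)
    then show ?thesis using A B C D by linarith
  qed
  then have "K * \<bar>?s\<bar> - 1 \<le> \<bar>?s'\<bar>" using m by (simp add: mult_le_cancel_left_pos)
  moreover have "(K - 1) * \<bar>?s\<bar> = K * \<bar>?s\<bar> - \<bar>?s\<bar>" by (simp add: algebra_simps)
  ultimately show ?thesis using s1 by linarith
qed

lemma sq_growth:
  assumes m: "m \<noteq> 0" and K: "3 \<le> K" and q: "\<bar>m\<bar> * K \<le> \<bar>q\<bar>"
  shows "1 \<le> \<bar>sq m q k\<bar> \<and> (K - 1) * \<bar>sq m q k\<bar> \<le> \<bar>sq m q (Suc k)\<bar>"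
proof (induction k)
  case 0
  show ?case using sq_step[OF m q, of 0] by simp
next
  case (Suc k)
  have "(K - 1) * 1 \<le> (K - 1) * \<bar>sq m q k\<bar>" using Suc K by (intro mult_left_mono) simp_all
  then have a: "K - 1 \<le> (K - 1) * \<bar>sq m q k\<bar>" by simp
  have b: "(K - 1) * \<bar>sq m q k\<bar> \<le> \<bar>sq m q (Suc k)\<bar>" using Suc by simp
  have "1 \<le> \<bar>sq m q (Suc k)\<bar>" using a b K by linarith
  then show ?case using sq_step[OF m q] by simp
qed

lemma sq_mono:
  assumes m: "m \<noteq> 0" and K: "3 \<le> K" and q: "\<bar>m\<bar> * K \<le> \<bar>q\<bar>"
  shows "i \<le> j \<Longrightarrow> \<bar>sq m q i\<bar> \<le> \<bar>sq m q j\<bar>"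
proof (induction j rule: dec_induct)
  case base then show ?case by simp
next
  case (step j)
  have "\<bar>sq m q j\<bar> \<le> (K - 1) * \<bar>sq m q j\<bar>" using K by (simp add: mult_le_cancel_right1)
  then show ?case using sq_growth[OF m K q, of j] step by simp
qed

lemma sq_dominates:
  assumes m: "m \<noteq> 0" and C: "0 \<le> C" and q: "\<bar>m\<bar> * (C * int n + 3) \<le> \<bar>q\<bar>"
    and N: "N \<le> n" and c: "\<And>k. k < N \<Longrightarrow> \<bar>c k\<bar> \<le> C"
  shows "\<bar>\<Sum>k<N. c k * sq m q k\<bar> < \<bar>sq m q N\<bar>"
proof (cases N)
  case 0 then show ?thesis by simp
next
  case (Suc N')
  let ?K = "C * int n + 3"
  have K: "3 \<le> ?K" using C by simp
  have bnd: "\<bar>c k * sq m q k\<bar> \<le> C * \<bar>sq m q N'\<bar>" if "k < N" for k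
  proof -
    have "\<bar>sq m q k\<bar> \<le> \<bar>sq m q N'\<bar>" using sq_mono[OF m K q] that Suc by simp
    with c[OF that] have "\<bar>c k\<bar> * \<bar>sq m q k\<bar> \<le> C * \<bar>sq m q N'\<bar>" by (rule mult_mono) (simp_all add: C)
    then show ?thesis by (simp add: abs_mult)
  qed
  have "\<bar>\<Sum>k<N. c k * sq m q k\<bar> \<le> (\<Sum>k<N. \<bar>c k * sq m q k\<bar>)" by (rule sum_abs)
  also have "\<dots> \<le> (\<Sum>k<N. C * \<bar>sq m q N'\<bar>)" by (rule sum_mono) (use bnd in simp)
  also have "\<dots> = int N * (C * \<bar>sq m q N'\<bar>)" by simp
  also have "\<dots> \<le> int n * (C * \<bar>sq m q N'\<bar>)"
    using N C by (intro mult_right_mono) simp_all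
  also have "\<dots> = (C * int n) * \<bar>sq m q N'\<bar>" by simp
  also have "\<dots> < (?K - 1) * \<bar>sq m q N'\<bar>"
  proof (rule mult_strict_right_mono)
    show "0 < \<bar>sq m q N'\<bar>" using sq_growth[OF m K q, of N'] by linarith
  qed simp
  also have "\<dots> \<le> \<bar>sq m q N\<bar>" using sq_growth[OF m K q, of N'] Suc by simp
  finally show ?thesis .
qed

lemma sq_independent:
  assumes m: "m \<noteq> 0" and C: "0 \<le> C" and q: "\<bar>m\<bar> * (C * int n + 3) \<le> \<bar>q\<bar>"
  shows "N \<le> n \<Longrightarrow> (\<forall>k<N. \<bar>c k\<bar> \<le> C) \<Longrightarrow> (\<Sum>k<N. c k * sq m q k) = 0 \<Longrightarrow> \<forall>k<N. c k = 0"
proof (induction N)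
  case 0 then show ?case by simp
next
  case (Suc N)
  have cN: "c N = 0"
  proof (rule ccontr)
    assume nz: "c N \<noteq> 0"
    have "1 * \<bar>sq m q N\<bar> \<le> \<bar>c N\<bar> * \<bar>sq m q N\<bar>" using nz by (intro mult_right_mono) simp_all
    then have "\<bar>sq m q N\<bar> \<le> \<bar>c N\<bar> * \<bar>sq m q N\<bar>" by simp
    also have "\<dots> = \<bar>\<Sum>k<N. c k * sq m q k\<bar>"
    proof -
      have "(\<Sum>k<N. c k * sq m q k) = - (c N * sq m q N)" using Suc.prems(3) by simp
      then show ?thesis by (simp add: abs_mult)
    qed
    also have "\<dots> < \<bar>sq m q N\<bar>" using sq_dominates[OF m C q, of N c] Suc.prems by simp
    finally show False by simp
  qed
  have "\<forall>k<N. c k = 0" using Suc cN by simp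
  then show ?case using cN less_Suc_eq by auto
qed

lemma theta_nonzero:
  assumes m: "m \<noteq> 0" and sz: "supp z n" and n1: "1 \<le> n" and nz: "\<exists>i<n. z i \<noteq> 0"
  shows "\<exists>Q. 0 \<le> Q \<and> (\<forall>q. \<bar>q\<bar> > Q \<longrightarrow> theta m q z n \<noteq> 0)"
proof -
  define C where "C = (\<Sum>i\<le>n. \<bar>z i\<bar>)"
  have C0: "0 \<le> C" by (simp add: C_def sum_nonneg)
  have Cb: "\<bar>z i\<bar> \<le> C" if "i \<le> n" for i
    unfolding C_def using that by (intro member_le_sum) auto
  define Q where "Q = \<bar>m\<bar> * (C * int n + 3) + \<bar>z 0\<bar>"
  have Q0: "0 \<le> Q" using C0 by (simp add: Q_def)
  show ?thesis
  proof (intro exI conjI allI impI)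
    show "0 \<le> Q" by (rule Q0)
    fix q assume qQ: "\<bar>q\<bar> > Q"
    have qb: "\<bar>m\<bar> * (C * int n + 3) \<le> \<bar>q\<bar>" using qQ by (simp add: Q_def)
    have t: "theta m q z n = z 0 + q * theta_tail m q z n" by (rule theta_split[OF sz n1])
    show "theta m q z n \<noteq> 0"
    proof (cases "theta_tail m q z n = 0")
      case False
      have "\<bar>q\<bar> * 1 \<le> \<bar>q\<bar> * \<bar>theta_tail m q z n\<bar>" using False by (intro mult_left_mono) simp_all
      moreover have "0 \<le> \<bar>m\<bar> * (C * int n + 3)" using C0 by simp
      ultimately have "\<bar>q * theta_tail m q z n\<bar> > \<bar>z 0\<bar>" using qQ unfolding abs_mult Q_def by linarith
      then show ?thesis using t by auto
    next
      case True
      have "\<forall>k<n. z (Suc k) = 0"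
        using sq_independent[OF m C0 qb, of n "\<lambda>k. z (Suc k)"] True Cb by (simp add: theta_tail_def)
      then have z0: "z 0 \<noteq> 0"
      proof -
        assume h: "\<forall>k<n. z (Suc k) = 0"
        obtain i where i: "i < n" "z i \<noteq> 0" using nz by blast
        show ?thesis
        proof (cases i)
          case 0 then show ?thesis using i by simp
        next
          case (Suc k) then show ?thesis using i h by auto
        qed
      qed
      then show ?thesis using t True by simp
    qed
  qed
qed

section \<open>Nontriviality in \<open>BStilde\<close> implies nontriviality in \<open>BS(m,q)\<close>\<close>

text \<open>The second half of the convergence: the normal form of a word nontrivial in \<open>BStilde\<close> is nonempty, and so is its image under \<open>theta\<close>, which is the \<open>BS(m,q)\<close> normal form of the word.\<close>
lemma tilde_nontrivial_imp_BS_nontrivial: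
  assumes m: "m \<noteq> 0" and xi: "\<xi> \<in> madic m" and w: "w \<notin> tilde_kernel m \<xi>"
  shows "\<exists>Q H. \<forall>q. \<bar>q\<bar> > Q \<and> q mod \<bar>m\<bar> ^ H = \<xi> H \<longrightarrow> w \<notin> BS_kernel m q"
proof -
  obtain L z n where s: "actT m \<xi> (to_tilde w) init_state = (L, z, n)" by (metis prod.collapse)
  have inv: "invT (L, z, n)" using act_inv[OF m invT_init_state, of \<xi> "to_tilde w"] s by simp
  then have sz: "supp z n" and n1: "1 \<le> n" by (auto simp: invT_def)
  have ev: "word_eq (BStilde_rels m \<xi>) (evalT (L, z, n)) (to_tilde w)"
  proof -
    have "word_eq (BStilde_rels m \<xi>) (evalT (actT m \<xi> (to_tilde w) init_state)) (evalT init_state @ to_tilde w)"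
      by (rule eval_act[OF m invT_init_state to_tilde_letters])
    moreover have "evalT init_state = []" by (simp add: init_state_def evalT_def evalE_Suc)
    ultimately show ?thesis using s by simp
  qed
  have ne: "L \<noteq> [] \<or> (\<exists>i<n. z i \<noteq> 0)"
  proof (rule ccontr)
    assume "\<not> (L \<noteq> [] \<or> (\<exists>i<n. z i \<noteq> 0))"
    then have "evalT (L, z, n) = []" by (auto simp: evalT_def intro: evalE_zero)
    then have "word_eq (BStilde_rels m \<xi>) (to_tilde w) []" using ev by (simp add: we_sym)
    then show False using w by (simp add: tilde_kernel_def)
  qed
  obtain Q1 H where QH: "0 \<le> Q1" "\<And>q. \<bar>q\<bar> > Q1 \<Longrightarrow> q mod \<bar>m\<bar> ^ H = \<xi> H \<Longrightarrow>
     theta_state m q (L, z, n) = actB m q w ([], 0)" using theta_act[OF m xi, of w] s by auto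
  obtain Q2 where Q2: "\<And>q. \<bar>q\<bar> > Q2 \<Longrightarrow> (\<exists>i<n. z i \<noteq> 0) \<Longrightarrow> theta m q z n \<noteq> 0"
    using theta_nonzero[OF m sz n1] by metis
  show ?thesis
  proof (intro exI allI impI)
    fix q assume a: "\<bar>q\<bar> > max Q1 Q2 \<and> q mod \<bar>m\<bar> ^ H = \<xi> H"
    show "w \<notin> BS_kernel m q"
    proof
      assume k: "w \<in> BS_kernel m q"
      have q0: "q \<noteq> 0" using a QH(1) by auto
      have "actB m q w ([], 0) = ([], 0)" by (rule actB_kernel[OF m q0 k])
      then have "theta_state m q (L, z, n) = ([], 0)" using QH(2)[of q] a by simp
      then have "L = []" "theta m q z n = 0" by (simp_all add: theta_state_def)
      then show False using ne Q2[of q] a by auto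
    qed
  qed
qed

lemma BS_kernel_eventually:
  assumes m: "m \<noteq> 0" and xi: "\<xi> \<in> madic m"
  shows "\<exists>Q H. \<forall>q. \<bar>q\<bar> > Q \<and> q mod \<bar>m\<bar> ^ H = \<xi> H \<longrightarrow> (w \<in> BS_kernel m q \<longleftrightarrow> w \<in> tilde_kernel m \<xi>)"
proof (cases "w \<in> tilde_kernel m \<xi>")
  case True
  then obtain H where "\<forall>q. q mod \<bar>m\<bar> ^ H = \<xi> H \<longrightarrow> w \<in> BS_kernel m q" using tilde_trivial_imp_BS_trivial[OF m xi] by blast
  then show ?thesis using True by blast
next
  case False
  then obtain Q H where "\<forall>q. \<bar>q\<bar> > Q \<and> q mod \<bar>m\<bar> ^ H = \<xi> H \<longrightarrow> w \<notin> BS_kernel m q"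
    using tilde_nontrivial_imp_BS_nontrivial[OF m xi] by blast
  then show ?thesis using False by blast
qed

text \<open>There are finitely many words of bounded length, so the agreement is uniform on balls.\<close>
lemma finite_gen2: "finite (UNIV :: gen2 set)"
proof -
  have u: "(UNIV :: gen2 set) = {A, B}" by (auto intro: gen2.exhaust)
  show ?thesis by (subst u) simp
qed

lemma finite_words: "finite {w :: gen2 word. length w \<le> R}"
proof -
  have "finite (UNIV :: (gen2 \<times> bool) set)" by (rule finite_Prod_UNIV[OF finite_gen2]) simp
  then have "finite {xs :: gen2 word. set xs \<subseteq> UNIV \<and> length xs \<le> R}" by (rule finite_lists_length_le)
  then show ?thesis by simp
qed

lemma BS_kernels_converge:
  assumes m: "m \<noteq> 0" and xi: "\<xi> \<in> madic m"
    and zs: "filterlim (\<lambda>n. \<bar>zs n\<bar>) at_top sequentially" "madic_conv m zs \<xi>"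
  shows "marked_conv (\<lambda>n. BS_kernel m (zs n)) (tilde_kernel m \<xi>)"
  unfolding marked_conv_def
proof
  fix R :: nat
  have ev: "\<forall>\<^sub>F n in sequentially. (w \<in> BS_kernel m (zs n) \<longleftrightarrow> w \<in> tilde_kernel m \<xi>)" for w
  proof -
    obtain Q H where QH: "\<And>q. \<bar>q\<bar> > Q \<Longrightarrow> q mod \<bar>m\<bar> ^ H = \<xi> H \<Longrightarrow> (w \<in> BS_kernel m q \<longleftrightarrow> w \<in> tilde_kernel m \<xi>)"
      using BS_kernel_eventually[OF m xi, of w] by blast
    have e1: "\<forall>\<^sub>F n in sequentially. Q + 1 \<le> \<bar>zs n\<bar>" using zs(1) by (simp add: filterlim_at_top)
    have e2: "\<forall>\<^sub>F n in sequentially. zs n mod \<bar>m\<bar> ^ H = \<xi> H" using zs(2) by (simp add: madic_conv_def)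
    show ?thesis
    proof (rule eventually_mono[OF eventually_conj[OF e1 e2]])
      fix n assume "Q + 1 \<le> \<bar>zs n\<bar> \<and> zs n mod \<bar>m\<bar> ^ H = \<xi> H"
      then show "w \<in> BS_kernel m (zs n) \<longleftrightarrow> w \<in> tilde_kernel m \<xi>" using QH[of "zs n"] by simp
    qed
  qed
  have "\<forall>\<^sub>F n in sequentially. \<forall>w \<in> {w :: gen2 word. length w \<le> R}. (w \<in> BS_kernel m (zs n) \<longleftrightarrow> w \<in> tilde_kernel m \<xi>)"
    by (rule eventually_ball_finite[OF finite_words]) (use ev in blast)
  then show "\<forall>\<^sub>F n in sequentially. \<forall>w. length w \<le> R \<longrightarrow> (w \<in> BS_kernel m (zs n) \<longleftrightarrow> w \<in> tilde_kernel m \<xi>)"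
    by (rule eventually_mono) blast
qed

lemma conv_unique:
  assumes "marked_conv K L" "marked_conv K L'"
  shows "L = L'"
proof (rule Set.set_eqI)
  fix w :: "gen2 word"
  have "\<forall>\<^sub>F n in sequentially. (\<forall>v. length v \<le> length w \<longrightarrow> (v \<in> K n \<longleftrightarrow> v \<in> L)) \<and>
     (\<forall>v. length v \<le> length w \<longrightarrow> (v \<in> K n \<longleftrightarrow> v \<in> L'))"
    using assms unfolding marked_conv_def by (intro eventually_conj) blast+
  then obtain N where N: "\<forall>n\<ge>N. (\<forall>v. length v \<le> length w \<longrightarrow> (v \<in> K n \<longleftrightarrow> v \<in> L)) \<and>
     (\<forall>v. length v \<le> length w \<longrightarrow> (v \<in> K n \<longleftrightarrow> v \<in> L'))"
    unfolding eventually_sequentially by blast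
  then have "(\<forall>v. length v \<le> length w \<longrightarrow> (v \<in> K N \<longleftrightarrow> v \<in> L)) \<and>
     (\<forall>v. length v \<le> length w \<longrightarrow> (v \<in> K N \<longleftrightarrow> v \<in> L'))" by blast
  then show "w \<in> L \<longleftrightarrow> w \<in> L'" by blast
qed

text \<open>Admissible sequences exist (e.g. \<open>\<xi>\<^sub>n + n |m|^n\<close>), so the defining property of \<open>BSbar_kernel\<close> is not vacuous.\<close>
lemma zs_exists:
  assumes m: "m \<noteq> 0" and xi: "\<xi> \<in> madic m"
  shows "\<exists>zs. filterlim (\<lambda>n. \<bar>zs n\<bar>) at_top sequentially \<and> madic_conv m zs \<xi>"
proof -
  define zs where "zs n = \<xi> n + \<bar>m\<bar> ^ n * int n" for n
  have lb: "int n \<le> \<bar>zs n\<bar>" for n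
  proof -
    have "0 \<le> \<xi> n" using madic_range[OF xi m] by simp
    moreover have "1 \<le> \<bar>m\<bar> ^ n" using m by simp
    then have "1 * int n \<le> \<bar>m\<bar> ^ n * int n" by (intro mult_right_mono) simp_all
    ultimately show ?thesis by (simp add: zs_def)
  qed
  have f: "filterlim (\<lambda>n. \<bar>zs n\<bar>) at_top sequentially"
    unfolding filterlim_at_top
  proof
    fix Z :: int
    have "\<forall>\<^sub>F n in sequentially. Z \<le> int n"
      unfolding eventually_sequentially by (rule exI[of _ "nat Z"]) auto
    then show "\<forall>\<^sub>F n in sequentially. Z \<le> \<bar>zs n\<bar>" by (rule eventually_mono) (use lb in \<open>auto intro: order_trans\<close>)
  qed
  have c: "madic_conv m zs \<xi>"
    unfolding madic_conv_def
  proof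
    fix h
    have "zs n mod \<bar>m\<bar> ^ h = \<xi> h" if "h \<le> n" for n
    proof -
      have "\<bar>m\<bar> ^ h dvd \<bar>m\<bar> ^ n * int n" using that by (simp add: le_imp_power_dvd)
      then have "zs n mod \<bar>m\<bar> ^ h = \<xi> n mod \<bar>m\<bar> ^ h" by (simp add: zs_def mod_add_right_eq[symmetric])
      also have "\<dots> = \<xi> h" using madic_mod[OF xi that] by simp
      finally show ?thesis .
    qed
    then show "\<forall>\<^sub>F n in sequentially. zs n mod \<bar>m\<bar> ^ h = \<xi> h"
      unfolding eventually_sequentially by blast
  qed
  show ?thesis using f c by blast
qed

lemma BSbar_kernel_eq:
  assumes m: "m \<noteq> 0" and xi: "\<xi> \<in> madic m"
  shows "BSbar_kernel m \<xi> = tilde_kernel m \<xi>"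
  unfolding BSbar_kernel_def
proof (rule the_equality)
  show "\<forall>zs. filterlim (\<lambda>n. \<bar>zs n\<bar>) at_top sequentially \<and> madic_conv m zs \<xi> \<longrightarrow>
      marked_conv (\<lambda>n. BS_kernel m (zs n)) (tilde_kernel m \<xi>)"
    using BS_kernels_converge[OF m xi] by blast
next
  fix L assume a: "\<forall>zs. filterlim (\<lambda>n. \<bar>zs n\<bar>) at_top sequentially \<and> madic_conv m zs \<xi> \<longrightarrow>
      marked_conv (\<lambda>n. BS_kernel m (zs n)) L"
  obtain zs where zs: "filterlim (\<lambda>n. \<bar>zs n\<bar>) at_top sequentially" "madic_conv m zs \<xi>"
    using zs_exists[OF m xi] by blast
  show "L = tilde_kernel m \<xi>" using conv_unique a BS_kernels_converge[OF m xi zs] zs by blast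
qed

theorem corollary2p9:
  fixes m :: int and \<xi> :: "nat \<Rightarrow> int"
  assumes "m \<noteq> 0" and "\<xi> \<in> madic m"
  shows "\<exists>f. f \<in> iso (BSbar m \<xi>) (BStilde m \<xi>)
     \<and> f (wclass (BSbar_kernel m \<xi>) [(A, True)]) = wclass (BStilde_rels m \<xi>) [(TA, True)]
     \<and> f (wclass (BSbar_kernel m \<xi>) [(B, True)]) = wclass (BStilde_rels m \<xi>) [(E 0, True)]
     \<and> inv_into (carrier (BSbar m \<xi>)) f (wclass (BStilde_rels m \<xi>) [(TA, True)])
         = wclass (BSbar_kernel m \<xi>) [(A, True)]
     \<and> (\<forall>i. inv_into (carrier (BSbar m \<xi>)) f (wclass (BStilde_rels m \<xi>) [(E i, True)])
         = wclass (BSbar_kernel m \<xi>) (bword m \<xi> i))"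
  using tilde_kernel_iso[of m \<xi>] unfolding BSbar_def BSbar_kernel_eq[OF assms] .

end
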